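(* Let $A_1,\ldots,A_N\in\mathbb{R}^{n\times n}$ be entrywise nonnegative (so the system below is positive) and let $h_1,\ldots,h_N>0$ be constant delays. Consider the delay-difference equation $$x(t)=\sum_{i=1}^NA_ix(t-h_i).$$ The following statements are equivalent: (i) The delay-difference equation is asymptotically stable (strongly stable). (ii) $\rho\left(\sum_{i=1}^NA_ie^{-j\omega_i}\right)<1$ for all $\omega_1,\ldots,\omega_N\in\mathbb{R}$ (with $j$ the imaginary unit). (iii) $\rho\left(\sum_{i=1}^NA_i\right)<1$. (iv) There exists $\mu\in\mathbb{R}^{nN}_{>0}$ such that $\mu^T\left(-I_{nN}+(\mathbf{1}_N\otimes I_n)[A_1\ \cdots\ A_N]\right)<0$. (v) There exists $\mu\in\mathbb{R}^{n}_{>0}$ such that $\mu^T\left(\sum_{i=1}^NA_i-I_n\right)<0$. (vi) There exist diagonal positive definite matrices $Q_1,\ldots,Q_N\in\mathbb{R}^{n\times n}$ such that, with $Q:=\mathrm{diag}(Q_1,\ldots,Q_N)$, $$\begin{bmatrix}-Q & \star\\ Q(\mathbf{1}_N\otimes I_n)[A_1\ \cdots\ A_N] & -Q\end{bmatrix}\prec0.$$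
   Context: $\rho(\cdot)$ denotes the spectral radius; $\mathbf{1}_N$ is the vector of ones and $\otimes$ the Kronecker product; vector inequalities are componentwise; $\star$ denotes the transpose of the symmetric block; $\prec0$ means negative definite. *)

theory Defs
  imports "HOL-Analysis.Analysis"
begin

text \<open>State dimension n is the finite index type 'n; the number of delays N is the
finite index type 'k. Vectors in R^{nN} are indexed by 'k \<times> 'n, where (i,a)
is component a of block i.\<close>

definition spec_rad :: "complex^'n^'n \<Rightarrow> real" where
  "spec_rad M = Sup (cmod ` {l. \<exists>v. v \<noteq> 0 \<and> M *v v = l *s v})"

definition cmat :: "real^'m^'n \<Rightarrow> complex^'m^'n" where
  "cmat M = (\<chi> i j. complex_of_real (M $ i $ j))"

definition dde_solution :: "('k::finite \<Rightarrow> real^'n^'n) \<Rightarrow> ('k \<Rightarrow> real) \<Rightarrow> (real \<Rightarrow> real^'n) \<Rightarrow> bool" where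
  "dde_solution A h x \<longleftrightarrow> (\<forall>t\<ge>0. x t = (\<Sum>i\<in>UNIV. A i *v x (t - h i)))"

definition max_delay :: "('k::finite \<Rightarrow> real) \<Rightarrow> real" where
  "max_delay h = Max (range h)"

definition dde_asymp_stable :: "('k::finite \<Rightarrow> real^'n^'n) \<Rightarrow> ('k \<Rightarrow> real) \<Rightarrow> bool" where
  "dde_asymp_stable A h \<longleftrightarrow>
     (\<forall>\<epsilon>>0. \<exists>\<delta>>0. \<forall>x. dde_solution A h x \<and>
          (\<forall>t\<in>{- max_delay h..<0}. norm (x t) \<le> \<delta>) \<longrightarrow> (\<forall>t\<ge>0. norm (x t) \<le> \<epsilon>)) \<and>
     (\<forall>x. dde_solution A h x \<and> bounded (x ` {- max_delay h..<0}) \<longrightarrow> (x \<longlongrightarrow> 0) at_top)"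

text \<open>(1_N \<otimes> I_n), an nN \<times> n matrix.\<close>
definition ones_kron_id :: "real^'n^('k::finite \<times> 'n)" where
  "ones_kron_id = (\<chi> p b. if snd p = b then 1 else 0)"

text \<open>Block row [A_1 ... A_N], an n \<times> nN matrix.\<close>
definition block_row :: "('k::finite \<Rightarrow> real^'n^'n) \<Rightarrow> real^('k \<times> 'n)^'n" where
  "block_row A = (\<chi> a q. A (fst q) $ a $ snd q)"

definition block_diag :: "('k::finite \<Rightarrow> real^'n^'n) \<Rightarrow> real^('k \<times> 'n)^('k \<times> 'n)" where
  "block_diag Q = (\<chi> p q. if fst p = fst q then Q (fst p) $ snd p $ snd q else 0)"

definition block2 :: "real^'m^'m \<Rightarrow> real^'m^'m \<Rightarrow> real^'m^'m \<Rightarrow> real^'m^'m \<Rightarrow> real^('m + 'm)^('m + 'm)" where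
  "block2 X Y Z W = (\<chi> p q. case (p, q) of
       (Inl i, Inl j) \<Rightarrow> X $ i $ j | (Inl i, Inr j) \<Rightarrow> Y $ i $ j
     | (Inr i, Inl j) \<Rightarrow> Z $ i $ j | (Inr i, Inr j) \<Rightarrow> W $ i $ j)"

definition is_diagonal :: "real^'n^'n \<Rightarrow> bool" where
  "is_diagonal M \<longleftrightarrow> (\<forall>i j. i \<noteq> j \<longrightarrow> M $ i $ j = 0)"

definition pos_def :: "real^'n^'n \<Rightarrow> bool" where
  "pos_def M \<longleftrightarrow> transpose M = M \<and> (\<forall>v. v \<noteq> 0 \<longrightarrow> v \<bullet> (M *v v) > 0)"

definition neg_def :: "real^'n^'n \<Rightarrow> bool" where
  "neg_def M \<longleftrightarrow> transpose M = M \<and> (\<forall>v. v \<noteq> 0 \<longrightarrow> v \<bullet> (M *v v) < 0)"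

end

(* All six conditions reduce to the existence of a Lyapunov vector: a positive mu with
   mu^T S < mu^T for the nonnegative matrix S = sum_i A_i.  Such a mu shrinks the mu-weighted
   l1 norm of eigenvectors of every matrix dominated entrywise by S, which bounds the spectral
   radius at every frequency.  If no such mu exists, a theorem of the alternative produces a
   nonnegative nonzero v with v <= S v; Brouwer's theorem turns it into an eigenvector with
   eigenvalue >= 1, and the solution with constant history v never drops below v.  Conversely a
   Lyapunov vector of S^T bounds solutions componentwise by a factor that decays geometrically on
   windows of length max_i h_i.  The block conditions carry the same information: blockwise sums
   and an even split of the slack pass between (iv) and (v), the diagonal weights mu_p / nu_p
   built from a left and a right Lyapunov vector solve the LMI (vi), and evaluating the LMI at
   (v, X v) rules out v <= X v. *)
theory Submission
  imports Defs "HOL-Computational_Algebra.Fundamental_Theorem_Algebra"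
begin

lemma matrix_vector_mult_nth: "(M *v x) $ a = (\<Sum>b\<in>UNIV. M $ a $ b * x $ b)"
  by (simp add: matrix_vector_mult_def)

lemma vector_matrix_mult_nth: "(x v* M) $ b = (\<Sum>a\<in>UNIV. x $ a * M $ a $ b)"
  by (simp add: vector_matrix_mult_def mult.commute)

lemma sum_delta_mult_left:
  fixes f :: "'b::finite \<Rightarrow> 'a::comm_semiring_1"
  shows "(\<Sum>q\<in>UNIV. (if p = q then c else 0) * f q) = c * f p"
proof -
  have "(\<Sum>q\<in>UNIV. (if p = q then c else 0) * f q) = (\<Sum>q\<in>UNIV. if p = q then c * f p else 0)"
    by (rule sum.cong) auto
  then show ?thesis by simp
qed

lemma sum_delta_mult_right:
  fixes f :: "'b::finite \<Rightarrow> 'a::comm_semiring_1"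
  shows "(\<Sum>q\<in>UNIV. f q * (if q = p then c else 0)) = f p * c"
proof -
  have "(\<Sum>q\<in>UNIV. f q * (if q = p then c else 0)) = (\<Sum>q\<in>UNIV. if p = q then f p * c else 0)"
    by (rule sum.cong) auto
  then show ?thesis by simp
qed

lemma sum_pos_if_nonneg_nonzero:
  fixes v :: "real^'n"
  assumes "\<And>a. 0 \<le> v $ a" and "v \<noteq> 0"
  shows "0 < (\<Sum>a\<in>UNIV. v $ a)"
proof -
  obtain a where "v $ a \<noteq> 0" using assms(2) by (auto simp: vec_eq_iff)
  then have "0 < v $ a" using assms(1)[of a] by simp
  moreover have "v $ a \<le> (\<Sum>a\<in>UNIV. v $ a)" by (rule member_le_sum) (auto simp: assms(1))
  ultimately show ?thesis by simp
qed

section \<open>Existence of eigenvalues\<close>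

definition poly_mat_apply :: "complex^'n^'n \<Rightarrow> complex poly \<Rightarrow> complex^'n \<Rightarrow> complex^'n" where
  "poly_mat_apply M p = fold_coeffs (\<lambda>a f w. a *s w + M *v f w) p (\<lambda>w. 0)"

lemma poly_mat_apply_0 [simp]: "poly_mat_apply M 0 u = 0"
  by (simp add: poly_mat_apply_def)

lemma poly_mat_apply_pCons: "poly_mat_apply M (pCons a p) u = a *s u + M *v poly_mat_apply M p u"
proof (cases "a = 0 \<and> p = 0")
  case True
  then show ?thesis by simp
next
  case False
  then show ?thesis
    by (cases "a = 0")
      (simp_all add: poly_mat_apply_def fold_coeffs_pCons_coeff_not_0_eq fold_coeffs_pCons_not_0_0_eq)
qed

lemma poly_mat_apply_add: "poly_mat_apply M (p + q) u = poly_mat_apply M p u + poly_mat_apply M q u"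
proof (induction p q rule: poly_induct2)
  case (pCons a p b q)
  then show ?case
    by (simp add: poly_mat_apply_pCons matrix_vector_right_distrib vector_sadd_rdistrib algebra_simps)
qed simp

lemma poly_mat_apply_smult: "poly_mat_apply M (smult c p) u = c *s poly_mat_apply M p u"
  by (induction p)
    (simp_all add: poly_mat_apply_pCons vector_add_ldistrib vector_smult_assoc vector_scalar_commute)

lemma poly_mat_apply_linear_factor:
  "poly_mat_apply M ([:-r, 1:] * q) u = M *v poly_mat_apply M q u - r *s poly_mat_apply M q u"
proof -
  have "[:-r, 1:] * q = smult (-r) q + pCons 0 q" by simp
  then have "poly_mat_apply M ([:-r, 1:] * q) u
      = poly_mat_apply M (smult (-r) q) u + poly_mat_apply M (pCons 0 q) u"
    by (simp only: poly_mat_apply_add)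
  moreover have "poly_mat_apply M (smult (-r) q) u = (-r) *s poly_mat_apply M q u"
    by (rule poly_mat_apply_smult)
  moreover have "poly_mat_apply M (pCons 0 q) u = M *v poly_mat_apply M q u"
    by (simp add: poly_mat_apply_pCons)
  ultimately show ?thesis by (simp add: vec_eq_iff)
qed

lemma poly_mat_apply_monom: "poly_mat_apply M (monom c i) u = c *s (((*v) M) ^^ i) u"
  by (induction i) (simp_all add: monom_0 monom_Suc poly_mat_apply_pCons vector_scalar_commute)

lemma poly_mat_apply_sum: "poly_mat_apply M (\<Sum>i\<in>I. f i) u = (\<Sum>i\<in>I. poly_mat_apply M (f i) u)"
  by (induction I rule: infinite_finite_induct) (auto simp: poly_mat_apply_add)

text \<open>A nonzero polynomial annihilating a nonzero vector splits into linear factors;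
  the last factor that does not yet kill the vector yields an eigenvector.\<close>
lemma eigenvector_if_poly_annihilates:
  fixes M :: "complex^'n^'n"
  assumes "p \<noteq> 0" "u \<noteq> 0" "poly_mat_apply M p u = 0"
  shows "\<exists>l w. w \<noteq> 0 \<and> M *v w = l *s w"
  using assms
proof (induction "degree p" arbitrary: p rule: less_induct)
  case less
  show ?case
  proof (cases "degree p = 0")
    case True
    then have "p = [:coeff p 0:]" by (simp add: degree_0_id)
    then have "poly_mat_apply M p u = coeff p 0 *s u" by (metis poly_mat_apply_0 poly_mat_apply_pCons
      add.right_neutral matrix_vector_mult_0_right)
    moreover have "coeff p 0 \<noteq> 0" using leading_coeff_neq_0[OF less.prems(1)] True by simp
    ultimately show ?thesis using less.prems(2,3) by simp
  next
    case False
    then have "\<not> constant (poly p)" by (simp add: constant_degree)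
    then obtain r where "poly p r = 0" using fundamental_theorem_of_algebra by blast
    then have "[:-r, 1:] dvd p" by (simp add: poly_eq_0_iff_dvd)
    then obtain q where pq: "p = [:-r, 1:] * q" by (rule dvdE)
    with less.prems(1) have q: "q \<noteq> 0" by auto
    have "degree p = degree [:-r, 1:] + degree q"
      unfolding pq by (rule degree_mult_eq) (simp_all add: q)
    then have "degree q < degree p" by simp
    show ?thesis
    proof (cases "poly_mat_apply M q u = 0")
      case True
      then show ?thesis using less.hyps \<open>degree q < degree p\<close> q less.prems(2) by blast
    next
      case False
      have "M *v poly_mat_apply M q u - r *s poly_mat_apply M q u = 0"
        using less.prems(3) by (simp only: pq poly_mat_apply_linear_factor)
      then have "M *v poly_mat_apply M q u = r *s poly_mat_apply M q u" by simp
      with False show ?thesis by blast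
    qed
  qed
qed

lemma card_le_CARD_if_independent:
  fixes T :: "(complex^'n) set"
  assumes "vec.independent T"
  shows "card T \<le> CARD('n)"
proof -
  have "card T \<le> vec.dim T" using vec.independent_bound_general[OF assms] by (rule conjunct2)
  also have "\<dots> \<le> vec.dim (UNIV :: (complex^'n) set)" by (rule vec.dim_subset) simp
  also have "\<dots> = CARD('n)" unfolding vec.dim_UNIV by (rule card_cart_basis)
  finally show ?thesis .
qed

lemma linear_relation_among_CARD_Suc:
  fixes f :: "nat \<Rightarrow> complex^'n"
  obtains c where "\<exists>i\<le>CARD('n). c i \<noteq> 0" "(\<Sum>i\<le>CARD('n). c i *s f i) = 0"
proof (cases "inj_on f {..CARD('n)}")
  case True
  have "card (f ` {..CARD('n)}) = Suc CARD('n)" using True by (simp add: card_image)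
  then have "\<not> vec.independent (f ` {..CARD('n)})"
    using card_le_CARD_if_independent by fastforce
  then obtain u where u: "\<exists>v\<in>f ` {..CARD('n)}. u v \<noteq> 0" "(\<Sum>v\<in>f ` {..CARD('n)}. u v *s v) = 0"
    using vec.dependent_finite by blast
  moreover have "(\<Sum>v\<in>f ` {..CARD('n)}. u v *s v) = (\<Sum>i\<le>CARD('n). u (f i) *s f i)"
    using sum.reindex[OF True, of "\<lambda>v. u v *s v"] by simp
  ultimately show ?thesis using that[of "\<lambda>i. u (f i)"] by auto
next
  case False
  then obtain i j where ij: "i \<le> CARD('n)" "j \<le> CARD('n)" "i \<noteq> j" "f i = f j"
    unfolding inj_on_def by auto
  define c where "c k = (if k = i then 1 else if k = j then -1 else (0::complex))" for k
  have "(\<Sum>k\<le>CARD('n). c k *s f k) = (\<Sum>k\<in>{i, j}. c k *s f k)"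
    by (rule sum.mono_neutral_right) (use ij in \<open>auto simp: c_def\<close>)
  also have "\<dots> = 0" using ij by (simp add: c_def)
  finally have "(\<Sum>k\<le>CARD('n). c k *s f k) = 0" .
  moreover have "\<exists>k\<le>CARD('n). c k \<noteq> 0" using ij by (auto simp: c_def intro!: exI[of _ i])
  ultimately show ?thesis by (rule that[rotated])
qed

text \<open>The Krylov vectors \<open>M\<^sup>i e\<close>, \<open>i \<le> n\<close>, satisfy a nontrivial linear relation,
  i.e. a nonzero polynomial in \<open>M\<close> annihilates \<open>e\<close>.\<close>
lemma eigenvector_exists:
  fixes M :: "complex^'n^'n"
  shows "\<exists>l v. v \<noteq> 0 \<and> M *v v = l *s v"
proof -
  obtain a :: 'n where True by blast
  define e :: "complex^'n" where "e = axis a 1"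
  obtain c where c: "\<exists>i\<le>CARD('n). c i \<noteq> 0" "(\<Sum>i\<le>CARD('n). c i *s (((*v) M) ^^ i) e) = 0"
    using linear_relation_among_CARD_Suc .
  define p where "p = (\<Sum>i\<le>CARD('n). monom (c i) i)"
  have "coeff p i = (if i \<le> CARD('n) then c i else 0)" for i
    by (simp add: p_def coeff_sum coeff_monom)
  then have "p \<noteq> 0" using c(1) by (auto simp: poly_eq_iff)
  moreover have "e \<noteq> 0" by (simp add: e_def)
  moreover have "poly_mat_apply M p e = 0"
    using c(2) by (simp add: p_def poly_mat_apply_sum poly_mat_apply_monom)
  ultimately show ?thesis by (rule eigenvector_if_poly_annihilates)
qed

lemma eigenvalue_norm_le_entry_sum:
  fixes M :: "complex^'n^'n"
  assumes "v \<noteq> 0" and "M *v v = l *s v"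
  shows "cmod l \<le> (\<Sum>a\<in>UNIV. \<Sum>b\<in>UNIV. cmod (M $ a $ b))"
proof -
  have "Max (range (\<lambda>b. cmod (v $ b))) \<in> range (\<lambda>b. cmod (v $ b))" by (intro Max_in) auto
  then obtain a where a: "Max (range (\<lambda>b. cmod (v $ b))) = cmod (v $ a)" by (rule rangeE)
  have amax: "cmod (v $ b) \<le> cmod (v $ a)" for b unfolding a[symmetric] by (intro Max_ge) auto
  have apos: "0 < cmod (v $ a)"
  proof (rule ccontr)
    assume "\<not> 0 < cmod (v $ a)"
    then have "v $ b = 0" for b using amax[of b] by simp
    then show False using assms(1) by (simp add: vec_eq_iff)
  qed
  have "cmod l * cmod (v $ a) = cmod (\<Sum>b\<in>UNIV. M $ a $ b * v $ b)"
    using arg_cong[OF assms(2), of "\<lambda>w. w $ a"] by (simp add: matrix_vector_mult_nth norm_mult)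
  also have "\<dots> \<le> (\<Sum>b\<in>UNIV. cmod (M $ a $ b) * cmod (v $ a))"
    by (rule order_trans[OF norm_sum], rule sum_mono) (simp add: norm_mult amax mult_left_mono)
  also have "\<dots> \<le> (\<Sum>a\<in>UNIV. \<Sum>b\<in>UNIV. cmod (M $ a $ b)) * cmod (v $ a)"
    unfolding sum_distrib_right[symmetric]
    by (rule mult_right_mono) (auto intro!: member_le_sum sum_nonneg)
  finally show ?thesis using apos by simp
qed

lemma spec_rad_le:
  fixes M :: "complex^'n^'n"
  assumes "\<And>l v. v \<noteq> 0 \<Longrightarrow> M *v v = l *s v \<Longrightarrow> cmod l \<le> g"
  shows "spec_rad M \<le> g"
  unfolding spec_rad_def using eigenvector_exists[of M] assms by (intro cSup_least) auto

lemma eigenvalue_norm_le_spec_rad: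
  fixes M :: "complex^'n^'n"
  assumes "v \<noteq> 0" "M *v v = l *s v"
  shows "cmod l \<le> spec_rad M"
  unfolding spec_rad_def
proof (rule cSup_upper)
  show "cmod l \<in> cmod ` {l. \<exists>v. v \<noteq> 0 \<and> M *v v = l *s v}" using assms by blast
  show "bdd_above (cmod ` {l. \<exists>v. v \<noteq> 0 \<and> M *v v = l *s v})"
    unfolding bdd_above_def using eigenvalue_norm_le_entry_sum[of _ M] by blast
qed

section \<open>Nonnegative matrices\<close>

definition lyapunov_vector :: "real^'m^'m \<Rightarrow> real^'m \<Rightarrow> bool" where
  "lyapunov_vector S \<mu> \<longleftrightarrow> (\<forall>a. 0 < \<mu> $ a) \<and> (\<forall>a. (\<mu> v* S) $ a < \<mu> $ a)"

definition subinvariant :: "real^'m^'m \<Rightarrow> real^'m \<Rightarrow> bool" where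
  "subinvariant S v \<longleftrightarrow> v \<noteq> 0 \<and> (\<forall>a. 0 \<le> v $ a \<and> v $ a \<le> (S *v v) $ a)"

lemma lyapunov_vector_contraction:
  assumes "lyapunov_vector S \<mu>"
  obtains g where "g < 1" "\<And>a. (\<mu> v* S) $ a \<le> g * \<mu> $ a"
proof
  define g where "g = Max (range (\<lambda>a. (\<mu> v* S) $ a / \<mu> $ a))"
  have pos: "0 < \<mu> $ a" and lt: "(\<mu> v* S) $ a < \<mu> $ a" for a
    using assms by (auto simp: lyapunov_vector_def)
  have "g \<in> range (\<lambda>a. (\<mu> v* S) $ a / \<mu> $ a)" unfolding g_def by (intro Max_in) auto
  then show "g < 1" using pos lt by (auto simp: divide_less_eq)
  have "(\<mu> v* S) $ a / \<mu> $ a \<le> g" for a unfolding g_def by (intro Max_ge) auto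
  then show "(\<mu> v* S) $ a \<le> g * \<mu> $ a" for a using pos[of a] by (simp add: divide_le_eq)
qed

text \<open>The \<open>\<mu>\<close>-weighted \<open>\<ell>\<^sup>1\<close> norm of an eigenvector shrinks by the contraction factor of \<open>\<mu>\<close>.\<close>
lemma spec_rad_lt_1_if_dominated:
  fixes S :: "real^'n^'n" and M :: "complex^'n^'n"
  assumes "lyapunov_vector S \<mu>" and dom: "\<And>a b. cmod (M $ a $ b) \<le> S $ a $ b"
  shows "spec_rad M < 1"
proof -
  obtain g where "g < 1" and "\<And>b. (\<mu> v* S) $ b \<le> g * \<mu> $ b"
    using lyapunov_vector_contraction[OF assms(1)] by blast
  then have g: "(\<Sum>a\<in>UNIV. \<mu> $ a * S $ a $ b) \<le> g * \<mu> $ b" for b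
    by (simp add: vector_matrix_mult_nth)
  have pos: "0 < \<mu> $ a" for a using assms(1) by (simp add: lyapunov_vector_def)
  have "spec_rad M \<le> g"
  proof (rule spec_rad_le)
    fix l v assume v: "v \<noteq> (0::complex^'n)" and ev: "M *v v = l *s v"
    define T where "T = (\<Sum>a\<in>UNIV. \<mu> $ a * cmod (v $ a))"
    have "0 < T"
    proof -
      obtain a where "v $ a \<noteq> 0" using v by (auto simp: vec_eq_iff)
      then have "0 < \<mu> $ a * cmod (v $ a)" using pos[of a] by simp
      moreover have "\<mu> $ a * cmod (v $ a) \<le> T"
        unfolding T_def by (rule member_le_sum) (simp_all add: less_imp_le[OF pos])
      ultimately show ?thesis by linarith
    qed
    have row: "cmod l * cmod (v $ a) \<le> (\<Sum>b\<in>UNIV. S $ a $ b * cmod (v $ b))" for a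
    proof -
      have "cmod l * cmod (v $ a) = cmod (\<Sum>b\<in>UNIV. M $ a $ b * v $ b)"
        using arg_cong[OF ev, of "\<lambda>w. w $ a"] by (simp add: matrix_vector_mult_nth norm_mult)
      also have "\<dots> \<le> (\<Sum>b\<in>UNIV. S $ a $ b * cmod (v $ b))"
        by (rule order_trans[OF norm_sum], rule sum_mono) (simp add: norm_mult dom mult_right_mono)
      finally show ?thesis .
    qed
    have "cmod l * T = (\<Sum>a\<in>UNIV. \<mu> $ a * (cmod l * cmod (v $ a)))"
      unfolding T_def by (simp add: sum_distrib_left mult_ac)
    also have "\<dots> \<le> (\<Sum>a\<in>UNIV. \<mu> $ a * (\<Sum>b\<in>UNIV. S $ a $ b * cmod (v $ b)))"
      by (rule sum_mono) (simp add: row mult_left_mono less_imp_le[OF pos])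
    also have "\<dots> = (\<Sum>b\<in>UNIV. \<Sum>a\<in>UNIV. \<mu> $ a * (S $ a $ b * cmod (v $ b)))"
      unfolding sum_distrib_left by (rule sum.swap)
    also have "\<dots> = (\<Sum>b\<in>UNIV. (\<Sum>a\<in>UNIV. \<mu> $ a * S $ a $ b) * cmod (v $ b))"
      by (intro sum.cong refl) (simp add: sum_distrib_left sum_distrib_right mult_ac)
    also have "\<dots> \<le> (\<Sum>b\<in>UNIV. g * \<mu> $ b * cmod (v $ b))"
      by (rule sum_mono) (simp add: g mult_right_mono)
    also have "\<dots> = g * T" unfolding T_def by (simp add: sum_distrib_left mult_ac)
    finally show "cmod l \<le> g" using \<open>0 < T\<close> by simp
  qed
  then show ?thesis using \<open>g < 1\<close> by simp
qed

definition prob_simplex :: "(real^'m) set" where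
  "prob_simplex = {x. (\<forall>a. 0 \<le> x $ a) \<and> (\<Sum>a\<in>UNIV. x $ a) = 1}"

lemma compact_prob_simplex: "compact prob_simplex"
proof -
  have "closed prob_simplex" unfolding prob_simplex_def
    by (intro closed_Collect_conj closed_Collect_all closed_Collect_le closed_Collect_eq
        continuous_intros)
  moreover have "prob_simplex \<subseteq> cball 0 1"
  proof
    fix x :: "real^'m" assume "x \<in> prob_simplex"
    then show "x \<in> cball 0 1" using norm_le_l1_cart[of x] by (simp add: prob_simplex_def)
  qed
  ultimately show ?thesis using bounded_cball bounded_subset compact_eq_bounded_closed by blast
qed

lemma convex_prob_simplex: "convex prob_simplex"
  unfolding convex_def
proof (intro ballI allI impI)
  fix x y :: "real^'m" and u w :: real
  assume "x \<in> prob_simplex" "y \<in> prob_simplex" "0 \<le> u" "0 \<le> w" "u + w = 1"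
  moreover have "(\<Sum>a\<in>UNIV. (u *\<^sub>R x + w *\<^sub>R y) $ a) = u * (\<Sum>a\<in>UNIV. x $ a) + w * (\<Sum>a\<in>UNIV. y $ a)"
    by (simp add: sum.distrib sum_distrib_left)
  ultimately show "u *\<^sub>R x + w *\<^sub>R y \<in> prob_simplex" by (simp add: prob_simplex_def)
qed

lemma axis_in_prob_simplex: "axis a 1 \<in> prob_simplex"
  by (auto simp: prob_simplex_def axis_def)

text \<open>Brouwer's fixed point theorem applied to \<open>x \<mapsto> S x / \<Sum>\<^sub>a (S x)\<^sub>a\<close> on the
  simplex points that are subinvariant.\<close>
lemma perron_eigenvector_if_subinvariant:
  fixes S :: "real^'n^'n"
  assumes nonneg: "\<And>a b. 0 \<le> S $ a $ b" and "subinvariant S v"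
  obtains x d where "x \<noteq> 0" "1 \<le> d" "S *v x = d *\<^sub>R x"
proof -
  define K where "K = prob_simplex \<inter> {x. \<forall>a. x $ a \<le> (S *v x) $ a}"
  have S_mono: "(S *v x) $ a \<le> (S *v y) $ a" if "\<And>a. x $ a \<le> y $ a" for x y a
    unfolding matrix_vector_mult_nth using that by (auto intro!: sum_mono mult_left_mono nonneg)
  have S_nonneg: "0 \<le> (S *v x) $ a" if "\<And>a. 0 \<le> x $ a" for x a
    using S_mono[of 0 x] that by simp
  have "closed {x. \<forall>a. x $ a \<le> (S *v x) $ a}" unfolding matrix_vector_mult_nth
    by (intro closed_Collect_all closed_Collect_le continuous_intros)
  then have "compact K" unfolding K_def by (rule compact_Int_closed[OF compact_prob_simplex])
  have "convex {x. \<forall>a. x $ a \<le> (S *v x) $ a}"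
    unfolding convex_def
    by (auto simp: matrix_vector_right_distrib matrix_vector_mult_scaleR intro!: add_mono mult_left_mono)
  then have "convex K" unfolding K_def by (rule convex_Int[OF convex_prob_simplex])
  define den where "den x = (\<Sum>a\<in>UNIV. (S *v x) $ a)" for x
  have den: "1 \<le> den x" if "x \<in> K" for x
  proof -
    have "(\<Sum>a\<in>UNIV. x $ a) \<le> den x" unfolding den_def using that by (intro sum_mono) (simp add: K_def)
    then show ?thesis using that by (simp add: K_def prob_simplex_def)
  qed
  define f where "f x = (1 / den x) *\<^sub>R (S *v x)" for x
  have "continuous_on K f" unfolding f_def den_def
    by (intro continuous_intros) (use den den_def in force)
  moreover have "f \<in> K \<rightarrow> K"
  proof
    fix x assume x: "x \<in> K"
    have "(S *v x) $ a \<le> (S *v (S *v x)) $ a" for a using x by (intro S_mono) (simp add: K_def)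
    then show "f x \<in> K" using den[OF x] S_nonneg x
      by (auto simp: K_def prob_simplex_def f_def den_def matrix_vector_mult_scaleR
          divide_right_mono simp flip: sum_divide_distrib)
  qed
  moreover have "K \<noteq> {}"
  proof -
    have v: "v \<noteq> 0" "\<And>a. 0 \<le> v $ a" "\<And>a. v $ a \<le> (S *v v) $ a"
      using assms(2) by (auto simp: subinvariant_def)
    have "(1 / (\<Sum>a\<in>UNIV. v $ a)) *\<^sub>R v \<in> K"
      using v sum_pos_if_nonneg_nonzero[OF v(2,1)]
      by (auto simp: K_def prob_simplex_def matrix_vector_mult_scaleR divide_right_mono
          simp flip: sum_divide_distrib)
    then show ?thesis by blast
  qed
  ultimately obtain x where x: "x \<in> K" "f x = x" using brouwer[OF \<open>compact K\<close> \<open>convex K\<close>] by blast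
  show ?thesis
  proof
    show "x \<noteq> 0" using x(1) by (auto simp: K_def prob_simplex_def)
    show "1 \<le> den x" using den x(1) .
    show "S *v x = den x *\<^sub>R x" using x den[OF x(1)] by (simp add: f_def vec_eq_iff field_simps)
  qed
qed

lemma one_le_spec_rad_if_subinvariant:
  fixes S :: "real^'n^'n"
  assumes "\<And>a b. 0 \<le> S $ a $ b" and "subinvariant S v"
  shows "1 \<le> spec_rad (cmat S)"
proof -
  obtain x d where x: "x \<noteq> 0" "1 \<le> d" "S *v x = d *\<^sub>R x"
    using perron_eigenvector_if_subinvariant[OF assms] .
  define y where "y = (\<chi> a. complex_of_real (x $ a))"
  have "cmat S *v y = complex_of_real d *s y"
  proof -
    have "(cmat S *v y) $ a = complex_of_real ((S *v x) $ a)" for a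
      by (simp add: matrix_vector_mult_nth cmat_def y_def)
    then show ?thesis using x(3) by (simp add: vec_eq_iff y_def)
  qed
  moreover have "y \<noteq> 0" using x(1) by (auto simp: y_def vec_eq_iff)
  ultimately have "cmod (complex_of_real d) \<le> spec_rad (cmat S)"
    by (intro eigenvalue_norm_le_spec_rad)
  then show ?thesis using x(2) by simp
qed

lemma lyapunov_vector_if_gap:
  fixes S :: "real^'m^'m"
  assumes "\<And>a. 0 \<le> \<mu> $ a" "0 < e" "\<And>a. (\<mu> v* S) $ a + e \<le> \<mu> $ a"
  obtains \<mu>' where "lyapunov_vector S \<mu>'"
proof
  define K where "K = (\<Sum>a\<in>UNIV. \<Sum>b\<in>UNIV. \<bar>S $ a $ b\<bar>) + 1"
  have "1 \<le> K" unfolding K_def by (simp add: sum_nonneg)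
  define \<delta> where "\<delta> = e / (2 * K)"
  have "0 < \<delta>" "\<delta> * K = e / 2" using assms(2) \<open>1 \<le> K\<close> by (simp_all add: \<delta>_def)
  define \<mu>' where "\<mu>' = (\<chi> a. \<mu> $ a + \<delta>)"
  have col: "(\<Sum>a\<in>UNIV. S $ a $ b) \<le> K" for b
  proof -
    have "(\<Sum>a\<in>UNIV. S $ a $ b) \<le> (\<Sum>a\<in>UNIV. \<bar>S $ a $ b\<bar>)" by (rule sum_mono) simp
    also have "\<dots> \<le> (\<Sum>a\<in>UNIV. \<Sum>b\<in>UNIV. \<bar>S $ a $ b\<bar>)"
      by (rule sum_mono, rule member_le_sum) auto
    finally have "(\<Sum>a\<in>UNIV. S $ a $ b) \<le> (\<Sum>a\<in>UNIV. \<Sum>b\<in>UNIV. \<bar>S $ a $ b\<bar>)" .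
    then show ?thesis by (simp add: K_def)
  qed
  have "(\<mu>' v* S) $ b = (\<mu> v* S) $ b + \<delta> * (\<Sum>a\<in>UNIV. S $ a $ b)" for b
    by (simp add: \<mu>'_def vector_matrix_mult_nth distrib_right sum.distrib sum_distrib_left)
  moreover have "\<delta> * (\<Sum>a\<in>UNIV. S $ a $ b) \<le> e / 2" for b
    using mult_left_mono[OF col \<open>0 < \<delta>\<close>[THEN less_imp_le]] \<open>\<delta> * K = e / 2\<close> by simp
  ultimately have le: "(\<mu>' v* S) $ b \<le> (\<mu> v* S) $ b + e / 2" for b
    by (metis add_le_cancel_left)
  show "lyapunov_vector S \<mu>'"
    unfolding lyapunov_vector_def
  proof (intro conjI allI)
    fix a
    show "0 < \<mu>' $ a" using assms(1)[of a] \<open>0 < \<delta>\<close> by (simp add: \<mu>'_def)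
    show "(\<mu>' v* S) $ a < \<mu>' $ a"
      using le[of a] assms(2) assms(3)[of a] \<open>0 < \<delta>\<close> by (simp add: \<mu>'_def)
  qed
qed

text \<open>A theorem of the alternative (Ville): separate the origin from the closed convex set
  \<open>{w + v - S v | w \<ge> 0, v \<in> prob_simplex}\<close>.\<close>
lemma lyapunov_vector_if_no_subinvariant:
  fixes S :: "real^'m^'m"
  assumes "\<nexists>v. subinvariant S v"
  obtains \<mu> where "lyapunov_vector S \<mu>"
proof -
  define L where "L v = v - S *v v" for v :: "real^'m"
  define Ow where "Ow = {w::real^'m. \<forall>a. 0 \<le> w $ a}"
  define C where "C = (\<Union>x\<in>Ow. \<Union>y\<in>L ` prob_simplex. {x + y})"
  have "linear L" unfolding L_def by (intro linear_compose_sub linear_ident matrix_vector_mul_linear)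
  have "closed Ow" unfolding Ow_def by (rule closed_positive_orthant)
  have "closed C" unfolding C_def
    by (intro closed_compact_sums \<open>closed Ow\<close> compact_continuous_image
        compact_prob_simplex linear_continuous_on \<open>linear L\<close>[THEN linear_conv_bounded_linear[THEN iffD1]])
  moreover have "convex C" unfolding C_def
    by (intro convex_sums convex_linear_image \<open>linear L\<close> convex_prob_simplex) (auto simp: Ow_def convex_def)
  moreover have "0 \<notin> C"
  proof
    assume "0 \<in> C"
    then obtain w v where w: "w \<in> Ow" and v: "v \<in> prob_simplex" and "w + L v = 0"
      unfolding C_def by force
    have "v $ a \<le> (S *v v) $ a" for a
    proof -
      have "w $ a + (v $ a - (S *v v) $ a) = 0" using \<open>w + L v = 0\<close> by (simp add: L_def vec_eq_iff)
      moreover have "0 \<le> w $ a" using w by (simp add: Ow_def)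
      ultimately show ?thesis by linarith
    qed
    moreover have "v \<noteq> 0" using v by (auto simp: prob_simplex_def)
    ultimately have "subinvariant S v" using v by (simp add: subinvariant_def prob_simplex_def)
    with assms show False by blast
  qed
  ultimately obtain \<mu> b0 where b0: "0 < b0" and sep: "\<And>c. c \<in> C \<Longrightarrow> b0 < \<mu> \<bullet> c"
    by (meson separating_hyperplane_closed_0)
  have sep': "b0 < \<mu> \<bullet> w + \<mu> \<bullet> L v" if "w \<in> Ow" "v \<in> prob_simplex" for w v
    using sep[of "w + L v"] that unfolding C_def by (auto simp: inner_add_right)
  have L_axis: "\<mu> \<bullet> L (axis b 1) = \<mu> $ b - (\<mu> v* S) $ b" for b
    by (simp add: L_def inner_diff_right inner_axis dot_lmul_matrix[symmetric])
  have "0 \<le> \<mu> $ a" for a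
  proof (rule ccontr)
    assume neg: "\<not> 0 \<le> \<mu> $ a"
    define t where "t = (\<bar>\<mu> \<bullet> L (axis a 1)\<bar> + b0) / (- \<mu> $ a)"
    have "0 \<le> t" unfolding t_def by (rule divide_nonneg_pos) (use neg b0 in auto)
    then have "t *\<^sub>R axis a 1 \<in> Ow" by (auto simp: Ow_def axis_def)
    from sep'[OF this axis_in_prob_simplex] have "b0 < t * \<mu> $ a + \<mu> \<bullet> L (axis a 1)"
      by (simp add: inner_axis)
    moreover have "t * \<mu> $ a = - (\<bar>\<mu> \<bullet> L (axis a 1)\<bar> + b0)" using neg by (simp add: t_def)
    ultimately show False using b0 abs_ge_self[of "\<mu> \<bullet> L (axis a 1)"] by linarith
  qed
  moreover have "(\<mu> v* S) $ b + b0 \<le> \<mu> $ b" for b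
    using sep'[of 0 "axis b 1"] L_axis[of b] by (simp add: Ow_def axis_in_prob_simplex)
  ultimately obtain \<mu>' where "lyapunov_vector S \<mu>'" by (rule lyapunov_vector_if_gap[OF _ b0])
  then show ?thesis by (rule that)
qed

lemma not_subinvariant_transpose_if_lyapunov_vector:
  fixes S :: "real^'m^'m"
  assumes nonneg: "\<And>a b. 0 \<le> S $ a $ b" and "lyapunov_vector S \<mu>"
  shows "\<not> subinvariant (transpose S) v"
proof
  assume "subinvariant (transpose S) v"
  then have v: "v \<noteq> 0" "\<And>a. 0 \<le> v $ a" "\<And>a. v $ a \<le> (v v* S) $ a"
    by (auto simp: subinvariant_def)
  have \<mu>: "\<And>a. 0 < \<mu> $ a" "\<And>a. (\<mu> v* S) $ a < \<mu> $ a"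
    using assms(2) by (auto simp: lyapunov_vector_def)
  define c where "c = Max (range (\<lambda>a. v $ a / \<mu> $ a))"
  have "c \<in> range (\<lambda>a. v $ a / \<mu> $ a)" unfolding c_def by (intro Max_in) auto
  then obtain a0 where "c = v $ a0 / \<mu> $ a0" by blast
  then have a0: "v $ a0 = c * \<mu> $ a0" using \<mu>(1)[of a0] by simp
  have "v $ a / \<mu> $ a \<le> c" for a unfolding c_def by (intro Max_ge) auto
  then have le: "v $ a \<le> c * \<mu> $ a" for a using \<mu>(1)[of a] by (simp add: divide_le_eq)
  have "0 < c"
  proof -
    obtain a where "v $ a \<noteq> 0" using v(1) by (auto simp: vec_eq_iff)
    then have "0 < c * \<mu> $ a" using le[of a] v(2)[of a] by linarith
    then show ?thesis using \<mu>(1)[of a] by (simp add: zero_less_mult_iff)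
  qed
  have "v $ a0 \<le> (\<Sum>b\<in>UNIV. v $ b * S $ b $ a0)" using v(3) by (simp add: vector_matrix_mult_nth)
  also have "\<dots> \<le> (\<Sum>b\<in>UNIV. c * \<mu> $ b * S $ b $ a0)"
    by (intro sum_mono mult_right_mono le nonneg)
  also have "\<dots> = c * (\<mu> v* S) $ a0" by (simp add: vector_matrix_mult_nth sum_distrib_left mult_ac)
  also have "\<dots> < c * \<mu> $ a0" using \<open>0 < c\<close> \<mu>(2) by simp
  finally show False using a0 by simp
qed

lemma lyapunov_vector_transpose:
  fixes S :: "real^'m^'m"
  assumes "\<And>a b. 0 \<le> S $ a $ b" and "lyapunov_vector S \<mu>"
  obtains \<nu> where "lyapunov_vector (transpose S) \<nu>"
proof (rule lyapunov_vector_if_no_subinvariant[of "transpose S"])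
  show "\<nexists>v. subinvariant (transpose S) v"
    using not_subinvariant_transpose_if_lyapunov_vector[OF assms] by blast
qed (rule that)

lemma spec_rad_lt_1_iff_lyapunov_vector:
  fixes S :: "real^'n^'n"
  assumes "\<And>a b. 0 \<le> S $ a $ b"
  shows "spec_rad (cmat S) < 1 \<longleftrightarrow> (\<exists>\<mu>. lyapunov_vector S \<mu>)"
proof
  assume "spec_rad (cmat S) < 1"
  then have "\<nexists>v. subinvariant S v" using one_le_spec_rad_if_subinvariant[OF assms] by force
  then obtain \<mu> where "lyapunov_vector S \<mu>" by (rule lyapunov_vector_if_no_subinvariant)
  then show "\<exists>\<mu>. lyapunov_vector S \<mu>" ..
next
  assume "\<exists>\<mu>. lyapunov_vector S \<mu>"
  then obtain \<mu> where "lyapunov_vector S \<mu>" ..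
  moreover have "cmod (cmat S $ a $ b) \<le> S $ a $ b" for a b using assms by (simp add: cmat_def)
  ultimately show "spec_rad (cmat S) < 1" by (rule spec_rad_lt_1_if_dominated)
qed

section \<open>Stability of the delay-difference equation\<close>

definition min_delay :: "('k::finite \<Rightarrow> real) \<Rightarrow> real" where
  "min_delay h = Min (range h)"

lemma min_delay_le: "min_delay h \<le> h i"
  unfolding min_delay_def by (rule Min_le) auto

lemma min_delay_pos:
  assumes "\<And>i. 0 < h i"
  shows "0 < min_delay h"
proof -
  have "min_delay h \<in> range h" unfolding min_delay_def by (intro Min_in) auto
  then show ?thesis using assms by auto
qed

lemma delay_le_max_delay: "h i \<le> max_delay h"
  unfolding max_delay_def by (rule Max_ge) auto

lemma max_delay_pos:
  fixes h :: "'k::finite \<Rightarrow> real"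
  assumes "\<And>i. 0 < h i"
  shows "0 < max_delay h"
proof -
  obtain i :: 'k where True by blast
  show ?thesis using assms[of i] delay_le_max_delay[of h i] by linarith
qed

lemma dde_solution_nth:
  assumes "dde_solution A h x" "0 \<le> t"
  shows "x t $ a = (\<Sum>i\<in>UNIV. \<Sum>b\<in>UNIV. A i $ a $ b * x (t - h i) $ b)"
  using assms by (simp add: dde_solution_def matrix_vector_mult_nth)

lemma sum_matrix_vector_nth:
  "((\<Sum>i\<in>I. A i) *v v) $ a = (\<Sum>i\<in>I. \<Sum>b\<in>UNIV. A i $ a $ b * v $ b)"
  unfolding matrix_vector_mult_nth sum_component sum_distrib_right by (rule sum.swap)

lemma dde_solution_abs_le:
  assumes nonneg: "\<And>i a b. 0 \<le> A i $ a $ b" and "dde_solution A h x" "0 \<le> t"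
    and prev: "\<And>i b. \<bar>x (t - h i) $ b\<bar> \<le> y $ b"
  shows "\<bar>x t $ a\<bar> \<le> ((\<Sum>i\<in>UNIV. A i) *v y) $ a"
proof -
  have "\<bar>x t $ a\<bar> \<le> (\<Sum>i\<in>UNIV. \<Sum>b\<in>UNIV. \<bar>A i $ a $ b * x (t - h i) $ b\<bar>)"
    unfolding dde_solution_nth[OF assms(2,3)] by (rule order_trans[OF sum_abs sum_mono[OF sum_abs]])
  also have "\<dots> \<le> (\<Sum>i\<in>UNIV. \<Sum>b\<in>UNIV. A i $ a $ b * y $ b)"
    by (intro sum_mono) (simp add: abs_mult nonneg prev mult_left_mono)
  finally show ?thesis by (simp add: sum_matrix_vector_nth)
qed

lemma power_nat_floor_delayed_le:
  fixes g H s t :: real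
  assumes g: "0 \<le> g" "g \<le> 1" and "0 < H" "s \<le> H" "0 \<le> t - s"
  shows "g ^ Suc (nat \<lfloor>(t - s) / H\<rfloor>) \<le> g ^ nat \<lfloor>t / H\<rfloor>"
proof -
  have "\<lfloor>t / H\<rfloor> \<le> \<lfloor>(t - s) / H + 1\<rfloor>"
    using assms by (intro floor_mono) (simp add: field_simps)
  then have "nat \<lfloor>t / H\<rfloor> \<le> Suc (nat \<lfloor>(t - s) / H\<rfloor>)" using assms by (simp add: nat_le_iff)
  then show ?thesis using g by (rule power_decreasing)
qed

text \<open>Every delayed time \<open>t - h\<^sub>i\<close> lies at most one window of length \<open>max_delay h\<close> back,
  so the bound gains a factor \<open>g\<close> per window; induction runs over steps of length \<open>min_delay h\<close>.\<close>
lemma dde_solution_decay: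
  fixes A :: "'k::finite \<Rightarrow> real^'n^'n" and h :: "'k \<Rightarrow> real"
  assumes nonneg: "\<And>i a b. 0 \<le> A i $ a $ b" and delays: "\<And>i. 0 < h i"
    and \<nu>: "\<And>a. 0 < \<nu> $ a" and g: "0 \<le> g" "g \<le> 1"
    and contr: "\<And>a. ((\<Sum>i\<in>UNIV. A i) *v \<nu>) $ a \<le> g * \<nu> $ a"
    and sol: "dde_solution A h x" and c: "0 \<le> c"
    and init: "\<And>s a. s \<in> {- max_delay h..<0} \<Longrightarrow> \<bar>x s $ a\<bar> \<le> c * \<nu> $ a"
    and "0 \<le> t"
  shows "\<bar>x t $ a\<bar> \<le> c * g ^ Suc (nat \<lfloor>t / max_delay h\<rfloor>) * \<nu> $ a"
proof -
  define H where "H = max_delay h"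
  have hH: "h i \<le> H" for i unfolding H_def by (rule delay_le_max_delay)
  have "0 < H" unfolding H_def using delays by (rule max_delay_pos)
  define m where "m t = nat \<lfloor>t / H\<rfloor>" for t
  define B where "B t = (if t < 0 then c else c * g ^ Suc (m t))" for t
  have B_delayed: "B (t - h i) \<le> c * g ^ m t" if "0 \<le> t" for t i
  proof (cases "t - h i < 0")
    case True
    then have "m t = 0" using that hH[of i] \<open>0 < H\<close> by (simp add: m_def floor_less_iff divide_less_eq)
    then show ?thesis using True by (simp add: B_def)
  next
    case False
    then have "g ^ Suc (m (t - h i)) \<le> g ^ m t"
      unfolding m_def using hH[of i] \<open>0 < H\<close> by (intro power_nat_floor_delayed_le[OF g]) auto
    then show ?thesis using False c by (simp add: B_def mult_left_mono)
  qed
  have bounded_by_B: "\<bar>x t $ a\<bar> \<le> B t * \<nu> $ a"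
    if "- H \<le> t" "t < - H + real n * min_delay h" for n t a
    using that
  proof (induction n arbitrary: t a)
    case (Suc n)
    show ?case
    proof (cases "t < 0")
      case True
      then show ?thesis using init Suc.prems by (simp add: B_def H_def)
    next
      case False
      have "\<bar>x (t - h i) $ b\<bar> \<le> ((c * g ^ m t) *\<^sub>R \<nu>) $ b" for i b
      proof -
        have "- H \<le> t - h i" "t - h i < - H + real n * min_delay h"
          using Suc.prems False hH[of i] min_delay_le[of h i] by (auto simp: algebra_simps)
        then have "\<bar>x (t - h i) $ b\<bar> \<le> B (t - h i) * \<nu> $ b" by (rule Suc.IH)
        also have "\<dots> \<le> c * g ^ m t * \<nu> $ b"
          using B_delayed[of t i] False \<nu>[of b] by (simp add: mult_right_mono)
        finally show ?thesis by simp
      qed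
      then have "\<bar>x t $ a\<bar> \<le> ((\<Sum>i\<in>UNIV. A i) *v ((c * g ^ m t) *\<^sub>R \<nu>)) $ a"
        using False by (intro dde_solution_abs_le[OF nonneg sol]) auto
      also have "\<dots> \<le> c * g ^ m t * (g * \<nu> $ a)"
        using contr[of a] c g by (simp add: matrix_vector_mult_scaleR mult_left_mono)
      finally show ?thesis using False by (simp add: B_def mult_ac)
    qed
  qed simp
  obtain n :: nat where "(t + H) / min_delay h < n" using reals_Archimedean2 by blast
  moreover have "0 < min_delay h" using delays by (rule min_delay_pos)
  ultimately have "t < - H + real n * min_delay h" by (simp add: divide_less_eq algebra_simps)
  then show ?thesis
    using bounded_by_B[of t] \<open>0 \<le> t\<close> \<open>0 < H\<close> by (simp add: B_def m_def H_def)
qed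

lemma tendsto_power_nat_floor_div:
  fixes g H :: real
  assumes "0 \<le> g" "g < 1" "0 < H"
  shows "((\<lambda>t. g ^ nat \<lfloor>t / H\<rfloor>) \<longlongrightarrow> 0) at_top"
proof -
  have "filterlim (\<lambda>t. (1 / H) * t) at_top at_top"
    using assms(3) by (intro filterlim_tendsto_pos_mult_at_top[OF tendsto_const] filterlim_ident) auto
  then have "filterlim (\<lambda>t. nat \<lfloor>t / H\<rfloor>) sequentially at_top"
    by (intro filterlim_compose[OF filterlim_nat_sequentially] filterlim_compose[OF filterlim_floor_sequentially])
      simp
  then show ?thesis using assms by (intro filterlim_compose[OF LIMSEQ_power_zero]) auto
qed

lemma dde_exponential_estimate:
  fixes A :: "'k::finite \<Rightarrow> real^'n^'n" and h :: "'k \<Rightarrow> real"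
  assumes nonneg: "\<And>i a b. 0 \<le> A i $ a $ b" and delays: "\<And>i. 0 < h i"
    and "lyapunov_vector (transpose (\<Sum>i\<in>UNIV. A i)) \<nu>"
  obtains K g where "0 \<le> K" "0 \<le> g" "g < 1"
    "\<And>x d t. dde_solution A h x \<Longrightarrow> \<forall>s\<in>{- max_delay h..<0}. norm (x s) \<le> d \<Longrightarrow> 0 \<le> t
      \<Longrightarrow> norm (x t) \<le> K * d * g ^ nat \<lfloor>t / max_delay h\<rfloor>"
proof -
  have \<nu>: "0 < \<nu> $ a" for a using assms(3) by (simp add: lyapunov_vector_def)
  obtain g0 where "g0 < 1" and g0: "\<And>a. ((\<Sum>i\<in>UNIV. A i) *v \<nu>) $ a \<le> g0 * \<nu> $ a"
    using lyapunov_vector_contraction[OF assms(3)] by auto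
  define g where "g = max g0 0"
  have g: "0 \<le> g" "g < 1" "((\<Sum>i\<in>UNIV. A i) *v \<nu>) $ a \<le> g * \<nu> $ a" for a
    using \<open>g0 < 1\<close> g0[of a] \<nu>[of a] by (auto simp: g_def intro: order_trans max.cobounded1 mult_right_mono)
  define \<nu>min where "\<nu>min = Min (range (\<lambda>a. \<nu> $ a))"
  have "\<nu>min \<in> range (\<lambda>a. \<nu> $ a)" unfolding \<nu>min_def by (intro Min_in) auto
  then have "0 < \<nu>min" using \<nu> by auto
  have "\<nu>min \<le> \<nu> $ a" for a unfolding \<nu>min_def by (rule Min_le) auto
  define K where "K = (\<Sum>a\<in>UNIV. \<nu> $ a) / \<nu>min"
  show ?thesis
  proof (rule that)
    show "0 \<le> K" unfolding K_def using \<nu> \<open>0 < \<nu>min\<close> by (simp add: sum_nonneg less_imp_le)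
    fix x d and t :: real
    assume sol: "dde_solution A h x" and init: "\<forall>s\<in>{- max_delay h..<0}. norm (x s) \<le> d" and "0 \<le> t"
    have "- max_delay h \<in> {- max_delay h..<0}" using max_delay_pos[of h] delays by simp
    then have "norm (x (- max_delay h)) \<le> d" using init by blast
    then have "0 \<le> d" using norm_ge_zero[of "x (- max_delay h)"] by linarith
    have "\<bar>x s $ a\<bar> \<le> d / \<nu>min * \<nu> $ a" if "s \<in> {- max_delay h..<0}" for s a
    proof -
      have "\<bar>x s $ a\<bar> \<le> d" using component_le_norm_cart[of "x s" a] init that by force
      also have "\<dots> \<le> d / \<nu>min * \<nu> $ a"
        using mult_left_mono[OF \<open>\<nu>min \<le> \<nu> $ a\<close> \<open>0 \<le> d\<close>] \<open>0 < \<nu>min\<close>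
        by (simp add: field_simps)
      finally show ?thesis .
    qed
    then have "\<bar>x t $ a\<bar> \<le> d / \<nu>min * g ^ Suc (nat \<lfloor>t / max_delay h\<rfloor>) * \<nu> $ a" for a
      using \<open>0 \<le> d\<close> \<open>0 < \<nu>min\<close> \<open>0 \<le> t\<close>
      by (intro dde_solution_decay[OF nonneg delays \<nu> g(1) _ g(3) sol]) (auto simp: less_imp_le g(2))
    also have "\<dots> a \<le> d / \<nu>min * g ^ nat \<lfloor>t / max_delay h\<rfloor> * \<nu> $ a" for a
      using g \<nu>[of a] \<open>0 \<le> d\<close> \<open>0 < \<nu>min\<close>
      by (intro mult_right_mono mult_left_mono) (auto simp: mult_left_le_one_le)
    finally have "norm (x t) \<le> (\<Sum>a\<in>UNIV. d / \<nu>min * g ^ nat \<lfloor>t / max_delay h\<rfloor> * \<nu> $ a)"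
      by (intro order_trans[OF norm_le_l1_cart] sum_mono)
    then show "norm (x t) \<le> K * d * g ^ nat \<lfloor>t / max_delay h\<rfloor>"
      by (simp add: K_def sum_distrib_left sum_divide_distrib mult_ac)
  qed (use g in auto)
qed

lemma dde_asymp_stable_if_lyapunov_vector:
  fixes A :: "'k::finite \<Rightarrow> real^'n^'n" and h :: "'k \<Rightarrow> real"
  assumes nonneg: "\<And>i a b. 0 \<le> A i $ a $ b" and delays: "\<And>i. 0 < h i"
    and "lyapunov_vector (transpose (\<Sum>i\<in>UNIV. A i)) \<nu>"
  shows "dde_asymp_stable A h"
proof -
  obtain K g where "0 \<le> K" "0 \<le> g" "g < 1" and bound: "\<And>x d t. dde_solution A h x
      \<Longrightarrow> \<forall>s\<in>{- max_delay h..<0}. norm (x s) \<le> d \<Longrightarrow> 0 \<le> t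
      \<Longrightarrow> norm (x t) \<le> K * d * g ^ nat \<lfloor>t / max_delay h\<rfloor>"
    by (rule dde_exponential_estimate[of A h, OF nonneg delays assms(3)]) (rule that)
  define H where "H = max_delay h"
  have "0 < H" unfolding H_def using delays by (rule max_delay_pos)
  show ?thesis
    unfolding dde_asymp_stable_def H_def[symmetric]
  proof (intro conjI allI impI)
    fix \<epsilon> :: real assume "0 < \<epsilon>"
    show "\<exists>\<delta>>0. \<forall>x. dde_solution A h x \<and> (\<forall>t\<in>{- H..<0}. norm (x t) \<le> \<delta>) \<longrightarrow> (\<forall>t\<ge>0. norm (x t) \<le> \<epsilon>)"
    proof (intro exI[of _ "\<epsilon> / (K + 1)"] conjI allI impI)
      fix x and t :: real assume x: "dde_solution A h x \<and> (\<forall>t\<in>{- H..<0}. norm (x t) \<le> \<epsilon> / (K + 1))"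
        and "0 \<le> t"
      then have "norm (x t) \<le> K * (\<epsilon> / (K + 1)) * g ^ nat \<lfloor>t / H\<rfloor>"
        using bound[of x "\<epsilon> / (K + 1)" t] unfolding H_def by blast
      also have "\<dots> \<le> K * (\<epsilon> / (K + 1))"
        using \<open>0 \<le> g\<close> \<open>g < 1\<close> \<open>0 \<le> K\<close> \<open>0 < \<epsilon>\<close> by (intro mult_left_le) (auto intro: power_le_one)
      also have "\<dots> \<le> \<epsilon>" using \<open>0 \<le> K\<close> \<open>0 < \<epsilon>\<close> by (simp add: field_simps)
      finally show "norm (x t) \<le> \<epsilon>" .
    qed (use \<open>0 \<le> K\<close> \<open>0 < \<epsilon>\<close> in simp)
  next
    fix x assume x: "dde_solution A h x \<and> bounded (x ` {- H..<0})"
    then obtain d where "\<forall>s\<in>{- H..<0}. norm (x s) \<le> d" unfolding bounded_iff by blast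
    then have "\<forall>\<^sub>F t in at_top. norm (x t) \<le> K * d * g ^ nat \<lfloor>t / H\<rfloor>"
      unfolding eventually_at_top_linorder H_def using x bound[of x d] by (intro exI[of _ 0]) blast
    moreover have "((\<lambda>t. K * d * g ^ nat \<lfloor>t / H\<rfloor>) \<longlongrightarrow> 0) at_top"
      using tendsto_mult_right_zero[OF tendsto_power_nat_floor_div[OF \<open>0 \<le> g\<close> \<open>g < 1\<close> \<open>0 < H\<close>]]
      by simp
    ultimately show "(x \<longlongrightarrow> 0) at_top" by (rule Lim_null_comparison)
  qed
qed

text \<open>The method of steps: the \<open>m\<close>-th iterate is the solution with constant history \<open>v\<close>
  on all times \<open>t < m * min_delay h\<close>.\<close>
fun dde_iterate :: "('k::finite \<Rightarrow> real^'n^'n) \<Rightarrow> ('k \<Rightarrow> real) \<Rightarrow> real^'n \<Rightarrow> nat \<Rightarrow> real \<Rightarrow> real^'n" where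
  "dde_iterate A h v 0 t = v"
| "dde_iterate A h v (Suc m) t = (if t < 0 then v else (\<Sum>i\<in>UNIV. A i *v dde_iterate A h v m (t - h i)))"

lemma dde_iterate_Suc_eq:
  assumes "0 < min_delay h" and "t < real m * min_delay h"
  shows "dde_iterate A h v m t = dde_iterate A h v (Suc m) t"
  using assms(2)
proof (induction m arbitrary: t)
  case 0
  then show ?case using assms(1) by simp
next
  case (Suc m)
  show ?case
  proof (cases "t < 0")
    case False
    have "t - h i < real m * min_delay h" for i
      using Suc.prems min_delay_le[of h i] by (simp add: algebra_simps)
    then have "dde_iterate A h v m (t - h i) = dde_iterate A h v (Suc m) (t - h i)" for i
      using Suc.IH by blast
    then show ?thesis using False by simp
  qed simp
qed

lemma dde_iterate_eq:
  assumes "0 < min_delay h" and "t < real m * min_delay h" "t < real m' * min_delay h"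
  shows "dde_iterate A h v m t = dde_iterate A h v m' t"
proof -
  have *: "dde_iterate A h v k t = dde_iterate A h v l t" if "t < real k * min_delay h" "k \<le> l" for k l
    using that(2)
  proof (induction l rule: dec_induct)
    case (step l)
    have "real k * min_delay h \<le> real l * min_delay h"
      using step.hyps assms(1) by (intro mult_right_mono) auto
    then have "t < real l * min_delay h" using that(1) by linarith
    with step.IH show ?case by (rule trans[OF _ dde_iterate_Suc_eq[OF assms(1)]])
  qed simp
  show ?thesis
  proof (cases "m \<le> m'")
    case True
    with assms(2) show ?thesis by (rule *)
  next
    case False
    then have "m' \<le> m" by simp
    with assms(3) show ?thesis by (rule *[symmetric])
  qed
qed

lemma dde_solution_dde_iterate:
  assumes delays: "\<And>i. 0 < h i"
  shows "dde_solution A h (\<lambda>t. dde_iterate A h v (Suc (nat \<lceil>t / min_delay h\<rceil>)) t)"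
  unfolding dde_solution_def
proof (intro allI impI)
  fix t :: real assume "0 \<le> t"
  have "0 < min_delay h" using delays by (rule min_delay_pos)
  have bound: "s < real (Suc (nat \<lceil>s / min_delay h\<rceil>)) * min_delay h" for s
  proof -
    have "s / min_delay h \<le> real (nat \<lceil>s / min_delay h\<rceil>)" by (rule real_nat_ceiling_ge)
    then show ?thesis using \<open>0 < min_delay h\<close> by (simp add: divide_le_eq algebra_simps)
  qed
  have "t / min_delay h \<le> real (nat \<lceil>t / min_delay h\<rceil>)" by (rule real_nat_ceiling_ge)
  then have "t \<le> real (nat \<lceil>t / min_delay h\<rceil>) * min_delay h"
    using \<open>0 < min_delay h\<close> by (simp add: divide_le_eq)
  then have "dde_iterate A h v (nat \<lceil>t / min_delay h\<rceil>) (t - h i)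
      = dde_iterate A h v (Suc (nat \<lceil>(t - h i) / min_delay h\<rceil>)) (t - h i)" for i
    using delays[of i] bound[of "t - h i"] by (intro dde_iterate_eq[OF \<open>0 < min_delay h\<close>]) auto
  then show "dde_iterate A h v (Suc (nat \<lceil>t / min_delay h\<rceil>)) t
      = (\<Sum>i\<in>UNIV. A i *v dde_iterate A h v (Suc (nat \<lceil>(t - h i) / min_delay h\<rceil>)) (t - h i))"
    using \<open>0 \<le> t\<close> by simp
qed

lemma dde_iterate_ge:
  assumes nonneg: "\<And>i a b. 0 \<le> A i $ a $ b" and v: "\<And>a. v $ a \<le> ((\<Sum>i\<in>UNIV. A i) *v v) $ a"
  shows "v $ a \<le> dde_iterate A h v m t $ a"
proof (induction m arbitrary: t a)
  case (Suc m)
  have "v $ a \<le> (\<Sum>i\<in>UNIV. \<Sum>b\<in>UNIV. A i $ a $ b * v $ b)"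
    using v by (simp add: sum_matrix_vector_nth)
  also have "\<dots> \<le> (\<Sum>i\<in>UNIV. \<Sum>b\<in>UNIV. A i $ a $ b * dde_iterate A h v m (t - h i) $ b)"
    by (intro sum_mono mult_left_mono Suc.IH nonneg)
  finally show ?case by (simp add: matrix_vector_mult_nth)
qed simp

lemma not_dde_asymp_stable_if_subinvariant:
  fixes A :: "'k::finite \<Rightarrow> real^'n^'n" and h :: "'k \<Rightarrow> real"
  assumes nonneg: "\<And>i a b. 0 \<le> A i $ a $ b" and delays: "\<And>i. 0 < h i"
    and "subinvariant (\<Sum>i\<in>UNIV. A i) v"
  shows "\<not> dde_asymp_stable A h"
proof
  assume stable: "dde_asymp_stable A h"
  define x where "x t = dde_iterate A h v (Suc (nat \<lceil>t / min_delay h\<rceil>)) t" for t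
  have sol: "dde_solution A h x" unfolding x_def using delays by (rule dde_solution_dde_iterate)
  have "x ` {- max_delay h..<0} \<subseteq> {v}" by (auto simp: x_def)
  then have "bounded (x ` {- max_delay h..<0})" by (rule bounded_subset[rotated]) simp
  with sol stable have "(x \<longlongrightarrow> 0) at_top" unfolding dde_asymp_stable_def by blast
  obtain a where "v $ a \<noteq> 0" using assms(3) by (auto simp: subinvariant_def vec_eq_iff)
  then have "0 < v $ a" using assms(3) by (auto simp: subinvariant_def intro: order.not_eq_order_implies_strict)
  then have "\<forall>\<^sub>F t in at_top. x t $ a < v $ a"
    using tendsto_vec_nth[OF \<open>(x \<longlongrightarrow> 0) at_top\<close>, of a] by (intro order_tendstoD) auto
  then obtain t where "x t $ a < v $ a" by (auto simp: eventually_at_top_linorder)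
  moreover have "v $ a \<le> x t $ a"
    unfolding x_def using assms(3) by (intro dde_iterate_ge[OF nonneg]) (simp add: subinvariant_def)
  ultimately show False by simp
qed

lemma dde_asymp_stable_iff_spec_rad_lt_1:
  fixes A :: "'k::finite \<Rightarrow> real^'n^'n" and h :: "'k \<Rightarrow> real"
  assumes nonneg: "\<And>i a b. 0 \<le> A i $ a $ b" and delays: "\<And>i. 0 < h i"
  shows "dde_asymp_stable A h \<longleftrightarrow> spec_rad (cmat (\<Sum>i\<in>UNIV. A i)) < 1"
proof -
  have S: "0 \<le> (\<Sum>i\<in>UNIV. A i) $ a $ b" for a b by (simp add: sum_nonneg nonneg)
  show ?thesis
  proof
    assume "dde_asymp_stable A h"
    then have "\<nexists>v. subinvariant (\<Sum>i\<in>UNIV. A i) v"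
      using not_dde_asymp_stable_if_subinvariant[of A h, OF nonneg delays] by blast
    then obtain \<mu> where "lyapunov_vector (\<Sum>i\<in>UNIV. A i) \<mu>"
      by (rule lyapunov_vector_if_no_subinvariant)
    then show "spec_rad (cmat (\<Sum>i\<in>UNIV. A i)) < 1"
      using spec_rad_lt_1_iff_lyapunov_vector[OF S] by blast
  next
    assume "spec_rad (cmat (\<Sum>i\<in>UNIV. A i)) < 1"
    then obtain \<mu> where "lyapunov_vector (\<Sum>i\<in>UNIV. A i) \<mu>"
      using spec_rad_lt_1_iff_lyapunov_vector[OF S] by blast
    then obtain \<nu> where "lyapunov_vector (transpose (\<Sum>i\<in>UNIV. A i)) \<nu>"
      using lyapunov_vector_transpose[OF S] by blast
    then show "dde_asymp_stable A h" by (rule dde_asymp_stable_if_lyapunov_vector[OF nonneg delays])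
  qed
qed

lemma spec_rad_frequency_lt_1_iff:
  fixes A :: "'k::finite \<Rightarrow> real^'n^'n"
  assumes nonneg: "\<And>i a b. 0 \<le> A i $ a $ b"
  shows "(\<forall>\<omega> :: 'k \<Rightarrow> real. spec_rad (\<chi> a b. \<Sum>i\<in>UNIV. exp (- \<i> * complex_of_real (\<omega> i))
            * complex_of_real (A i $ a $ b)) < 1)
    \<longleftrightarrow> spec_rad (cmat (\<Sum>i\<in>UNIV. A i)) < 1"
proof
  assume "\<forall>\<omega> :: 'k \<Rightarrow> real. spec_rad (\<chi> a b. \<Sum>i\<in>UNIV. exp (- \<i> * complex_of_real (\<omega> i))
            * complex_of_real (A i $ a $ b)) < 1"
  from this[rule_format, of "\<lambda>_. 0"] show "spec_rad (cmat (\<Sum>i\<in>UNIV. A i)) < 1"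
    by (simp add: cmat_def)
next
  assume "spec_rad (cmat (\<Sum>i\<in>UNIV. A i)) < 1"
  then obtain \<mu> where \<mu>: "lyapunov_vector (\<Sum>i\<in>UNIV. A i) \<mu>"
    using spec_rad_lt_1_iff_lyapunov_vector[of "\<Sum>i\<in>UNIV. A i"] nonneg by (auto simp: sum_nonneg)
  show "\<forall>\<omega> :: 'k \<Rightarrow> real. spec_rad (\<chi> a b. \<Sum>i\<in>UNIV. exp (- \<i> * complex_of_real (\<omega> i))
            * complex_of_real (A i $ a $ b)) < 1"
  proof
    fix \<omega> :: "'k \<Rightarrow> real"
    have "cmod (\<Sum>i\<in>UNIV. exp (- \<i> * complex_of_real (\<omega> i)) * complex_of_real (A i $ a $ b))
        \<le> (\<Sum>i\<in>UNIV. A i) $ a $ b" for a b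
      by (rule order_trans[OF norm_sum]) (simp add: norm_mult norm_exp_eq_Re nonneg)
    with \<mu> show "spec_rad (\<chi> a b. \<Sum>i\<in>UNIV. exp (- \<i> * complex_of_real (\<omega> i))
            * complex_of_real (A i $ a $ b)) < 1"
      by (intro spec_rad_lt_1_if_dominated) auto
  qed
qed

section \<open>Block reformulations\<close>

lemma ones_kron_id_block_row_nth:
  "(ones_kron_id ** block_row A) $ p $ q = A (fst q) $ snd p $ snd q"
  by (simp add: matrix_matrix_mult_def ones_kron_id_def block_row_def sum_delta_mult_left)

lemma lyapunov_vector_iff_minus_id:
  "lyapunov_vector X \<mu> \<longleftrightarrow> (\<forall>p. 0 < \<mu> $ p) \<and> (\<forall>p. (\<mu> v* (X - mat 1)) $ p < 0)"
proof -
  have "(\<mu> v* (X - mat 1)) $ p = (\<mu> v* X) $ p - \<mu> $ p" for p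
    by (simp add: vector_matrix_mult_nth mat_def right_diff_distrib sum_subtractf sum_delta_mult_right)
  then show ?thesis by (auto simp: lyapunov_vector_def)
qed

lemma vector_matrix_mult_sum_nth:
  "(x v* (\<Sum>i\<in>I. A i)) $ b = (\<Sum>i\<in>I. (x v* A i) $ b)"
  unfolding vector_matrix_mult_nth sum_component sum_distrib_left by (rule sum.swap)

lemma vector_matrix_mult_ones_kron_id_block_row:
  "(\<mu> v* (ones_kron_id ** block_row A)) $ p = ((\<chi> a. \<Sum>i\<in>UNIV. \<mu> $ (i, a)) v* A (fst p)) $ snd p"
proof -
  have "(\<mu> v* (ones_kron_id ** block_row A)) $ p
      = (\<Sum>i\<in>UNIV. \<Sum>a\<in>UNIV. \<mu> $ (i, a) * A (fst p) $ a $ snd p)"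
    by (simp add: vector_matrix_mult_nth ones_kron_id_block_row_nth sum.cartesian_product split_def)
  also have "\<dots> = (\<Sum>a\<in>UNIV. (\<Sum>i\<in>UNIV. \<mu> $ (i, a)) * A (fst p) $ a $ snd p)"
    unfolding sum_distrib_right by (rule sum.swap)
  finally show ?thesis by (simp add: vector_matrix_mult_nth)
qed

lemma lyapunov_vector_sum_if_block:
  fixes A :: "'k::finite \<Rightarrow> real^'n^'n"
  assumes "lyapunov_vector (ones_kron_id ** block_row A) \<mu>"
  shows "lyapunov_vector (\<Sum>i\<in>UNIV. A i) (\<chi> a. \<Sum>i\<in>UNIV. \<mu> $ (i, a))"
  unfolding lyapunov_vector_def
proof (intro conjI allI)
  have \<mu>: "0 < \<mu> $ p" "((\<chi> a. \<Sum>i\<in>UNIV. \<mu> $ (i, a)) v* A (fst p)) $ snd p < \<mu> $ p" for p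
    using assms unfolding lyapunov_vector_def vector_matrix_mult_ones_kron_id_block_row[symmetric]
    by blast+
  fix a
  show "0 < (\<chi> a. \<Sum>i\<in>UNIV. \<mu> $ (i, a)) $ a" by (simp add: sum_pos \<mu>(1))
  show "((\<chi> a. \<Sum>i\<in>UNIV. \<mu> $ (i, a)) v* (\<Sum>i\<in>UNIV. A i)) $ a < (\<chi> a. \<Sum>i\<in>UNIV. \<mu> $ (i, a)) $ a"
    unfolding vector_matrix_mult_sum_nth using \<mu>(2)[of "(_, a)"] by (simp add: sum_strict_mono)
qed

text \<open>The slack \<open>\<nu> - \<nu>\<^sup>T \<Sum>\<^sub>i A\<^sub>i\<close> is spread evenly over the \<open>N\<close> blocks.\<close>
lemma lyapunov_vector_block_if_sum:
  fixes A :: "'k::finite \<Rightarrow> real^'n^'n"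
  assumes nonneg: "\<And>i a b. 0 \<le> A i $ a $ b" and "lyapunov_vector (\<Sum>i\<in>UNIV. A i) \<nu>"
  obtains \<mu> where "lyapunov_vector (ones_kron_id ** block_row A) \<mu>"
proof
  define slack where "slack a = \<nu> $ a - (\<nu> v* (\<Sum>i\<in>UNIV. A i)) $ a" for a
  have "0 < slack a" "0 < \<nu> $ a" for a using assms(2) by (auto simp: slack_def lyapunov_vector_def)
  define \<mu> :: "real^('k \<times> 'n)" where "\<mu> = (\<chi> p. (\<nu> v* A (fst p)) $ snd p + slack (snd p) / CARD('k))"
  have "(\<chi> a. \<Sum>i\<in>UNIV. \<mu> $ (i, a)) = \<nu>"
    by (simp add: vec_eq_iff \<mu>_def sum.distrib slack_def vector_matrix_mult_sum_nth)
  moreover have "0 \<le> (\<nu> v* A i) $ a" for i a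
    using \<open>0 < \<nu> $ _\<close> by (simp add: vector_matrix_mult_nth sum_nonneg nonneg less_imp_le)
  ultimately show "lyapunov_vector (ones_kron_id ** block_row A) \<mu>"
    using \<open>0 < slack _\<close>
    by (auto simp: lyapunov_vector_def vector_matrix_mult_ones_kron_id_block_row \<mu>_def
        intro: add_nonneg_pos)
qed

section \<open>The linear matrix inequality\<close>

definition diag_mat :: "('m::finite \<Rightarrow> real) \<Rightarrow> real^'m^'m" where
  "diag_mat d = (\<chi> p q. if p = q then d p else 0)"

definition lmi_mat :: "('m::finite \<Rightarrow> real) \<Rightarrow> real^'m^'m \<Rightarrow> real^('m + 'm)^('m + 'm)" where
  "lmi_mat d X = block2 (- diag_mat d) (transpose (diag_mat d ** X)) (diag_mat d ** X) (- diag_mat d)"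

lemma lmi_mat_nth:
  "lmi_mat d X $ Inl p $ Inl q = - (if p = q then d p else 0)"
  "lmi_mat d X $ Inl p $ Inr q = d q * X $ q $ p"
  "lmi_mat d X $ Inr p $ Inl q = d p * X $ p $ q"
  "lmi_mat d X $ Inr p $ Inr q = - (if p = q then d p else 0)"
  by (simp_all add: lmi_mat_def block2_def transpose_def diag_mat_def matrix_matrix_mult_def
      sum_delta_mult_left)

lemma transpose_lmi_mat: "transpose (lmi_mat d X) = lmi_mat d X"
proof -
  have "lmi_mat d X $ Q $ P = lmi_mat d X $ P $ Q" for P Q
    by (cases P; cases Q) (auto simp: lmi_mat_nth)
  then show ?thesis by (simp add: vec_eq_iff transpose_def)
qed

lemma sum_UNIV_sum:
  "sum f (UNIV :: ('a::finite + 'b::finite) set) = (\<Sum>a\<in>UNIV. f (Inl a)) + (\<Sum>b\<in>UNIV. f (Inr b))"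
  using sum.Plus[of UNIV UNIV f] by simp

lemma lmi_mat_quadratic_form:
  fixes z :: "real^('m::finite + 'm)"
  shows "z \<bullet> (lmi_mat d X *v z) = 2 * (\<Sum>p\<in>UNIV. d p * z $ Inr p * (\<Sum>q\<in>UNIV. X $ p $ q * z $ Inl q))
      - (\<Sum>p\<in>UNIV. d p * (z $ Inl p)\<^sup>2) - (\<Sum>p\<in>UNIV. d p * (z $ Inr p)\<^sup>2)"
proof -
  have cross: "(\<Sum>p\<in>UNIV. z $ Inl p * (\<Sum>q\<in>UNIV. d q * X $ q $ p * z $ Inr q))
      = (\<Sum>p\<in>UNIV. d p * z $ Inr p * (\<Sum>q\<in>UNIV. X $ p $ q * z $ Inl q))"
    unfolding sum_distrib_left by (subst sum.swap) (simp add: mult_ac)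
  have row_Inl: "(lmi_mat d X *v z) $ Inl p
      = (\<Sum>q\<in>UNIV. d q * X $ q $ p * z $ Inr q) - d p * z $ Inl p" for p
    by (simp add: matrix_vector_mult_nth sum_UNIV_sum lmi_mat_nth sum_negf sum_delta_mult_left)
  have row_Inr: "(lmi_mat d X *v z) $ Inr p
      = d p * (\<Sum>q\<in>UNIV. X $ p $ q * z $ Inl q) - d p * z $ Inr p" for p
  proof -
    have "(\<Sum>q\<in>UNIV. z $ Inr q * (if p = q then d p else 0)) = d p * z $ Inr p"
      using sum_delta_mult_left[of p "d p" "\<lambda>q. z $ Inr q"] by (simp add: mult.commute)
    then show ?thesis
      by (simp add: matrix_vector_mult_nth sum_UNIV_sum lmi_mat_nth sum_negf sum_distrib_left mult_ac)
  qed
  have "z \<bullet> (lmi_mat d X *v z)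
      = (\<Sum>p\<in>UNIV. z $ Inl p * (lmi_mat d X *v z) $ Inl p) + (\<Sum>p\<in>UNIV. z $ Inr p * (lmi_mat d X *v z) $ Inr p)"
    by (simp add: inner_vec_def sum_UNIV_sum)
  also have "\<dots> = (\<Sum>p\<in>UNIV. z $ Inl p * (\<Sum>q\<in>UNIV. d q * X $ q $ p * z $ Inr q) - d p * (z $ Inl p)\<^sup>2)
      + (\<Sum>p\<in>UNIV. d p * z $ Inr p * (\<Sum>q\<in>UNIV. X $ p $ q * z $ Inl q) - d p * (z $ Inr p)\<^sup>2)"
    by (simp add: row_Inl row_Inr right_diff_distrib power2_eq_square mult_ac)
  finally show ?thesis by (simp add: sum_subtractf cross)
qed

lemma weighted_Cauchy_Schwarz:
  fixes w t :: "'a \<Rightarrow> real"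
  assumes "\<And>q. q \<in> I \<Longrightarrow> 0 \<le> w q"
  shows "(\<Sum>q\<in>I. w q * t q)\<^sup>2 \<le> (\<Sum>q\<in>I. w q) * (\<Sum>q\<in>I. w q * (t q)\<^sup>2)"
proof -
  have "(\<Sum>q\<in>I. w q * t q) = (\<Sum>q\<in>I. sqrt (w q) * (sqrt (w q) * t q))"
    using assms by (intro sum.cong refl) (simp add: mult.assoc[symmetric])
  also have "(\<dots>)\<^sup>2 \<le> (\<Sum>q\<in>I. (sqrt (w q))\<^sup>2) * (\<Sum>q\<in>I. (sqrt (w q) * t q)\<^sup>2)"
    by (rule Cauchy_Schwarz_ineq_sum)
  also have "\<dots> = (\<Sum>q\<in>I. w q) * (\<Sum>q\<in>I. w q * (t q)\<^sup>2)"
    using assms by (simp add: power_mult_distrib)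
  finally show ?thesis .
qed

lemma row_square_le:
  fixes X :: "real^'m^'m" and x :: "'m \<Rightarrow> real"
  assumes nonneg: "\<And>a b. 0 \<le> X $ a $ b" and "lyapunov_vector (transpose X) \<nu>"
  shows "(\<Sum>q\<in>UNIV. X $ p $ q * x q)\<^sup>2 \<le> \<nu> $ p * (\<Sum>q\<in>UNIV. X $ p $ q * (x q)\<^sup>2 / \<nu> $ q)"
proof -
  have \<nu>pos: "0 < \<nu> $ p" and \<nu>lt: "(\<Sum>q\<in>UNIV. X $ p $ q * \<nu> $ q) < \<nu> $ p" for p
    using assms(2) by (auto simp: lyapunov_vector_def matrix_vector_mult_nth)
  have scale: "X $ p $ q * x q = (X $ p $ q * \<nu> $ q) * (x q / \<nu> $ q)" for q
    using \<nu>pos[of q] by simp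
  have "(\<Sum>q\<in>UNIV. X $ p $ q * x q)\<^sup>2 = (\<Sum>q\<in>UNIV. (X $ p $ q * \<nu> $ q) * (x q / \<nu> $ q))\<^sup>2"
    by (simp only: scale)
  also have "\<dots> \<le> (\<Sum>q\<in>UNIV. X $ p $ q * \<nu> $ q) * (\<Sum>q\<in>UNIV. (X $ p $ q * \<nu> $ q) * (x q / \<nu> $ q)\<^sup>2)"
    by (rule weighted_Cauchy_Schwarz) (simp add: nonneg \<nu>pos less_imp_le)
  also have "\<dots> \<le> \<nu> $ p * (\<Sum>q\<in>UNIV. (X $ p $ q * \<nu> $ q) * (x q / \<nu> $ q)\<^sup>2)"
    using \<nu>lt[of p] by (intro mult_right_mono) (auto intro!: sum_nonneg simp: nonneg \<nu>pos less_imp_le)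
  also have "(\<Sum>q\<in>UNIV. (X $ p $ q * \<nu> $ q) * (x q / \<nu> $ q)\<^sup>2) = (\<Sum>q\<in>UNIV. X $ p $ q * (x q)\<^sup>2 / \<nu> $ q)"
    using \<nu>pos by (intro sum.cong refl) (simp add: power2_eq_square field_simps)
  finally show ?thesis .
qed

text \<open>Cauchy-Schwarz with weights \<open>\<nu>\<close> bounds each row; summing the rows against \<open>\<mu>\<close>
  then uses \<open>\<mu>\<^sup>T X < \<mu>\<^sup>T\<close> column by column.\<close>
lemma diagonal_lyapunov_decrease:
  fixes X :: "real^'m^'m" and x :: "'m \<Rightarrow> real"
  assumes nonneg: "\<And>a b. 0 \<le> X $ a $ b"
    and \<mu>: "lyapunov_vector X \<mu>" and \<nu>: "lyapunov_vector (transpose X) \<nu>" and "x q0 \<noteq> 0"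
  shows "(\<Sum>p\<in>UNIV. \<mu> $ p / \<nu> $ p * (\<Sum>q\<in>UNIV. X $ p $ q * x q)\<^sup>2)
    < (\<Sum>p\<in>UNIV. \<mu> $ p / \<nu> $ p * (x p)\<^sup>2)"
proof -
  have \<mu>pos: "0 < \<mu> $ p" and \<mu>lt: "(\<Sum>p\<in>UNIV. \<mu> $ p * X $ p $ q) < \<mu> $ q" for p q
    using \<mu> by (auto simp: lyapunov_vector_def vector_matrix_mult_nth)
  have \<nu>pos: "0 < \<nu> $ p" for p using \<nu> by (simp add: lyapunov_vector_def)
  have row: "(\<Sum>q\<in>UNIV. X $ p $ q * x q)\<^sup>2 \<le> \<nu> $ p * (\<Sum>q\<in>UNIV. X $ p $ q * (x q)\<^sup>2 / \<nu> $ q)" for p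
    by (rule row_square_le[OF nonneg \<nu>])
  have "(\<Sum>p\<in>UNIV. \<mu> $ p / \<nu> $ p * (\<Sum>q\<in>UNIV. X $ p $ q * x q)\<^sup>2)
      \<le> (\<Sum>p\<in>UNIV. \<mu> $ p * (\<Sum>q\<in>UNIV. X $ p $ q * (x q)\<^sup>2 / \<nu> $ q))"
  proof (rule sum_mono)
    fix p
    have "\<mu> $ p / \<nu> $ p * (\<Sum>q\<in>UNIV. X $ p $ q * x q)\<^sup>2
        \<le> \<mu> $ p / \<nu> $ p * (\<nu> $ p * (\<Sum>q\<in>UNIV. X $ p $ q * (x q)\<^sup>2 / \<nu> $ q))"
      using \<mu>pos[of p] \<nu>pos[of p] by (intro mult_left_mono[OF row]) simp
    then show "\<mu> $ p / \<nu> $ p * (\<Sum>q\<in>UNIV. X $ p $ q * x q)\<^sup>2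
        \<le> \<mu> $ p * (\<Sum>q\<in>UNIV. X $ p $ q * (x q)\<^sup>2 / \<nu> $ q)"
      using \<nu>pos[of p] by simp
  qed
  also have "\<dots> = (\<Sum>q\<in>UNIV. (\<Sum>p\<in>UNIV. \<mu> $ p * X $ p $ q) * ((x q)\<^sup>2 / \<nu> $ q))"
    unfolding sum_distrib_left sum_distrib_right by (subst sum.swap) (simp add: mult_ac)
  also have "\<dots> < (\<Sum>q\<in>UNIV. \<mu> $ q * ((x q)\<^sup>2 / \<nu> $ q))"
  proof (rule sum_strict_mono_ex1)
    show "\<forall>q\<in>UNIV. (\<Sum>p\<in>UNIV. \<mu> $ p * X $ p $ q) * ((x q)\<^sup>2 / \<nu> $ q) \<le> \<mu> $ q * ((x q)\<^sup>2 / \<nu> $ q)"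
    proof
      fix q
      have "0 \<le> (x q)\<^sup>2 / \<nu> $ q" using \<nu>pos[of q] by simp
      then show "(\<Sum>p\<in>UNIV. \<mu> $ p * X $ p $ q) * ((x q)\<^sup>2 / \<nu> $ q) \<le> \<mu> $ q * ((x q)\<^sup>2 / \<nu> $ q)"
        by (rule mult_right_mono[OF less_imp_le[OF \<mu>lt]])
    qed
    show "\<exists>q\<in>UNIV. (\<Sum>p\<in>UNIV. \<mu> $ p * X $ p $ q) * ((x q)\<^sup>2 / \<nu> $ q) < \<mu> $ q * ((x q)\<^sup>2 / \<nu> $ q)"
    proof
      have "0 < (x q0)\<^sup>2 / \<nu> $ q0" using \<nu>pos[of q0] \<open>x q0 \<noteq> 0\<close> by simp
      then show "(\<Sum>p\<in>UNIV. \<mu> $ p * X $ p $ q0) * ((x q0)\<^sup>2 / \<nu> $ q0) < \<mu> $ q0 * ((x q0)\<^sup>2 / \<nu> $ q0)"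
        by (rule mult_strict_right_mono[OF \<mu>lt])
    qed simp
  qed simp
  finally show ?thesis by (simp add: mult_ac)
qed

lemma neg_def_lmi_mat_if_lyapunov_vector:
  fixes X :: "real^'m^'m"
  assumes nonneg: "\<And>a b. 0 \<le> X $ a $ b" and \<mu>: "lyapunov_vector X \<mu>"
  obtains d where "\<And>p. 0 < d p" "neg_def (lmi_mat d X)"
proof -
  obtain \<nu> where \<nu>: "lyapunov_vector (transpose X) \<nu>" using lyapunov_vector_transpose[OF assms] .
  define d where "d p = \<mu> $ p / \<nu> $ p" for p
  have d: "0 < d p" for p using \<mu> \<nu> by (simp add: d_def lyapunov_vector_def)
  have "z \<bullet> (lmi_mat d X *v z) < 0" if "z \<noteq> 0" for z :: "real^('m + 'm)"
  proof -
    define Xz where "Xz p = (\<Sum>q\<in>UNIV. X $ p $ q * z $ Inl q)" for p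
    have AM_GM: "2 * (\<Sum>p\<in>UNIV. d p * z $ Inr p * Xz p)
        \<le> (\<Sum>p\<in>UNIV. d p * (z $ Inr p)\<^sup>2) + (\<Sum>p\<in>UNIV. d p * (Xz p)\<^sup>2)"
    proof -
      have "2 * (d p * z $ Inr p * Xz p) \<le> d p * (z $ Inr p)\<^sup>2 + d p * (Xz p)\<^sup>2" for p
        using mult_left_mono[OF zero_le_power2[of "z $ Inr p - Xz p"] less_imp_le[OF d]]
        by (simp add: power2_diff algebra_simps)
      then show ?thesis by (simp add: sum_distrib_left sum.distrib[symmetric] sum_mono)
    qed
    show ?thesis
    proof (cases "\<exists>q. z $ Inl q \<noteq> 0")
      case True
      then obtain q0 where "z $ Inl q0 \<noteq> 0" by blast
      from diagonal_lyapunov_decrease[OF nonneg \<mu> \<nu>, of "\<lambda>q. z $ Inl q", OF this]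
      have "(\<Sum>p\<in>UNIV. d p * (Xz p)\<^sup>2) < (\<Sum>p\<in>UNIV. d p * (z $ Inl p)\<^sup>2)"
        by (simp add: d_def Xz_def)
      then show ?thesis using AM_GM by (simp add: lmi_mat_quadratic_form Xz_def[symmetric])
    next
      case False
      then have "Xz p = 0" for p by (simp add: Xz_def)
      obtain P where "z $ P \<noteq> 0" using \<open>z \<noteq> 0\<close> by (auto simp: vec_eq_iff)
      with False obtain p where "z $ Inr p \<noteq> 0" by (cases P) auto
      then have "0 < (\<Sum>p\<in>UNIV. d p * (z $ Inr p)\<^sup>2)"
        using d by (intro sum_pos2[of UNIV p]) (auto simp: less_imp_le)
      then show ?thesis using False \<open>\<And>p. Xz p = 0\<close>
        by (simp add: lmi_mat_quadratic_form Xz_def[symmetric])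
    qed
  qed
  then show ?thesis using d transpose_lmi_mat that unfolding neg_def_def by blast
qed

lemma lyapunov_vector_if_neg_def_lmi_mat:
  fixes X :: "real^'m^'m"
  assumes d: "\<And>p. 0 < d p" and "neg_def (lmi_mat d X)"
  obtains \<mu> where "lyapunov_vector X \<mu>"
proof (rule lyapunov_vector_if_no_subinvariant)
  show "\<nexists>v. subinvariant X v"
  proof
    assume "\<exists>v. subinvariant X v"
    then obtain v where v: "v \<noteq> 0" "\<And>a. 0 \<le> v $ a" "\<And>a. v $ a \<le> (X *v v) $ a"
      by (auto simp: subinvariant_def)
    define z :: "real^('m + 'm)" where "z = (\<chi> P. case P of Inl p \<Rightarrow> v $ p | Inr p \<Rightarrow> (X *v v) $ p)"
    have "z $ Inl p = v $ p" for p by (simp add: z_def)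
    then have "z \<noteq> 0" using v(1) by (metis vec_eq_iff zero_index)
    then have "z \<bullet> (lmi_mat d X *v z) < 0" using assms(2) by (simp add: neg_def_def)
    moreover have "z \<bullet> (lmi_mat d X *v z) = (\<Sum>p\<in>UNIV. d p * ((X *v v) $ p)\<^sup>2) - (\<Sum>p\<in>UNIV. d p * (v $ p)\<^sup>2)"
      by (simp add: lmi_mat_quadratic_form z_def matrix_vector_mult_nth power2_eq_square algebra_simps)
    moreover have "(\<Sum>p\<in>UNIV. d p * (v $ p)\<^sup>2) \<le> (\<Sum>p\<in>UNIV. d p * ((X *v v) $ p)\<^sup>2)"
      using v(2,3) d by (intro sum_mono mult_left_mono power_mono) (auto simp: less_imp_le)
    ultimately show False by simp
  qed
qed

lemma block_diag_eq_diag_mat: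
  assumes "\<And>i. is_diagonal (Q i)"
  shows "block_diag Q = diag_mat (\<lambda>p. Q (fst p) $ snd p $ snd p)"
  using assms by (auto simp: vec_eq_iff block_diag_def diag_mat_def is_diagonal_def prod_eq_iff)

lemma pos_def_diag_mat:
  fixes e :: "'n::finite \<Rightarrow> real"
  assumes "\<And>a. 0 < e a"
  shows "pos_def (diag_mat e)"
  unfolding pos_def_def
proof (intro conjI allI impI)
  show "transpose (diag_mat e) = diag_mat e" by (auto simp: vec_eq_iff transpose_def diag_mat_def)
  fix v :: "real^'n" assume "v \<noteq> 0"
  then obtain a where "v $ a \<noteq> 0" by (auto simp: vec_eq_iff)
  have "(diag_mat e *v v) $ b = e b * v $ b" for b
    by (simp add: matrix_vector_mult_nth diag_mat_def sum_delta_mult_left)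
  then have "v \<bullet> (diag_mat e *v v) = (\<Sum>a\<in>UNIV. e a * (v $ a)\<^sup>2)"
    by (simp add: inner_vec_def power2_eq_square mult_ac)
  also have "\<dots> > 0"
    using assms \<open>v $ a \<noteq> 0\<close> by (intro sum_pos2[of UNIV a]) (auto simp: less_imp_le)
  finally show "0 < v \<bullet> (diag_mat e *v v)" .
qed

lemma pos_def_diagonal_pos:
  assumes "pos_def M"
  shows "0 < M $ a $ a"
proof -
  have "0 < axis a 1 \<bullet> (M *v axis a 1)" using assms by (simp add: pos_def_def)
  then show ?thesis by (simp add: inner_axis' matrix_vector_mult_basis column_def)
qed

lemma lmi_iff_lyapunov_vector:
  fixes X :: "real^('k::finite \<times> 'n::finite)^('k \<times> 'n)"
  assumes nonneg: "\<And>p q. 0 \<le> X $ p $ q"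
  shows "(\<exists>Q :: 'k \<Rightarrow> real^'n^'n. (\<forall>i. is_diagonal (Q i) \<and> pos_def (Q i)) \<and>
            neg_def (block2 (- block_diag Q) (transpose (block_diag Q ** X)) (block_diag Q ** X)
                            (- block_diag Q)))
    \<longleftrightarrow> (\<exists>\<mu>. lyapunov_vector X \<mu>)"
proof
  assume "\<exists>Q :: 'k \<Rightarrow> real^'n^'n. (\<forall>i. is_diagonal (Q i) \<and> pos_def (Q i)) \<and>
            neg_def (block2 (- block_diag Q) (transpose (block_diag Q ** X)) (block_diag Q ** X)
                            (- block_diag Q))"
  then obtain Q :: "'k \<Rightarrow> real^'n^'n" where Q: "\<And>i. is_diagonal (Q i)" "\<And>i. pos_def (Q i)"
    and LMI: "neg_def (block2 (- block_diag Q) (transpose (block_diag Q ** X)) (block_diag Q ** X)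
                            (- block_diag Q))"
    by blast
  define d where "d = (\<lambda>p. Q (fst p) $ snd p $ snd p)"
  have "0 < d p" for p unfolding d_def using Q(2) by (simp add: pos_def_diagonal_pos)
  moreover have "neg_def (lmi_mat d X)"
    using LMI unfolding d_def by (simp add: lmi_mat_def block_diag_eq_diag_mat[OF Q(1)])
  ultimately obtain \<mu> where "lyapunov_vector X \<mu>" by (rule lyapunov_vector_if_neg_def_lmi_mat)
  then show "\<exists>\<mu>. lyapunov_vector X \<mu>" ..
next
  assume "\<exists>\<mu>. lyapunov_vector X \<mu>"
  then obtain d where d: "\<And>p. 0 < d p" and "neg_def (lmi_mat d X)"
    using neg_def_lmi_mat_if_lyapunov_vector[OF nonneg] by blast
  define Q where "Q i = diag_mat (\<lambda>a. d (i, a))" for i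
  have "is_diagonal (Q i)" for i by (simp add: Q_def is_diagonal_def diag_mat_def)
  moreover have "pos_def (Q i)" for i unfolding Q_def by (rule pos_def_diag_mat) (rule d)
  moreover have "block_diag Q = diag_mat d"
    by (auto simp: vec_eq_iff block_diag_def diag_mat_def Q_def prod_eq_iff)
  ultimately show "\<exists>Q :: 'k \<Rightarrow> real^'n^'n. (\<forall>i. is_diagonal (Q i) \<and> pos_def (Q i)) \<and>
            neg_def (block2 (- block_diag Q) (transpose (block_diag Q ** X)) (block_diag Q ** X)
                            (- block_diag Q))"
    using \<open>neg_def (lmi_mat d X)\<close> by (intro exI[of _ Q]) (simp add: lmi_mat_def)
qed

theorem theorem11:
  fixes A :: "'k::finite \<Rightarrow> real^'n^'n" and h :: "'k \<Rightarrow> real"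
  assumes nonneg: "\<And>i a b. A i $ a $ b \<ge> 0"
    and delays: "\<And>i. h i > 0"
  shows "(dde_asymp_stable A h
            \<longleftrightarrow> (\<forall>\<omega> :: 'k \<Rightarrow> real.
                  spec_rad (\<chi> a b. \<Sum>i\<in>UNIV. exp (- \<i> * complex_of_real (\<omega> i)) * complex_of_real (A i $ a $ b)) < 1))
       \<and> ((\<forall>\<omega> :: 'k \<Rightarrow> real.
                  spec_rad (\<chi> a b. \<Sum>i\<in>UNIV. exp (- \<i> * complex_of_real (\<omega> i)) * complex_of_real (A i $ a $ b)) < 1)
            \<longleftrightarrow> spec_rad (cmat (\<Sum>i\<in>UNIV. A i)) < 1)
       \<and> (spec_rad (cmat (\<Sum>i\<in>UNIV. A i)) < 1
            \<longleftrightarrow> (\<exists>\<mu> :: real^('k \<times> 'n). (\<forall>p. \<mu> $ p > 0) \<and>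
                  (\<forall>p. (\<mu> v* (- mat 1 + ones_kron_id ** block_row A)) $ p < 0)))
       \<and> ((\<exists>\<mu> :: real^('k \<times> 'n). (\<forall>p. \<mu> $ p > 0) \<and>
                  (\<forall>p. (\<mu> v* (- mat 1 + ones_kron_id ** block_row A)) $ p < 0))
            \<longleftrightarrow> (\<exists>\<mu> :: real^'n. (\<forall>a. \<mu> $ a > 0) \<and>
                  (\<forall>a. (\<mu> v* ((\<Sum>i\<in>UNIV. A i) - mat 1)) $ a < 0)))
       \<and> ((\<exists>\<mu> :: real^'n. (\<forall>a. \<mu> $ a > 0) \<and>
                  (\<forall>a. (\<mu> v* ((\<Sum>i\<in>UNIV. A i) - mat 1)) $ a < 0))
            \<longleftrightarrow> (\<exists>Q :: 'k \<Rightarrow> real^'n^'n. (\<forall>i. is_diagonal (Q i) \<and> pos_def (Q i)) \<and>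
                  neg_def (block2 (- block_diag Q)
                                  (transpose (block_diag Q ** ones_kron_id ** block_row A))
                                  (block_diag Q ** ones_kron_id ** block_row A)
                                  (- block_diag Q))))"
proof -
  have S_nonneg: "0 \<le> (\<Sum>i\<in>UNIV. A i) $ a $ b" for a b by (simp add: sum_nonneg nonneg)
  have block_nonneg: "0 \<le> (ones_kron_id ** block_row A) $ p $ q" for p q
    by (simp add: ones_kron_id_block_row_nth nonneg)
  have block_iff_sum: "(\<exists>\<mu>. lyapunov_vector (ones_kron_id ** block_row A) \<mu>)
      \<longleftrightarrow> (\<exists>\<nu>. lyapunov_vector (\<Sum>i\<in>UNIV. A i) \<nu>)"
    using lyapunov_vector_sum_if_block lyapunov_vector_block_if_sum[of A, OF nonneg] by blast
  show ?thesis
    unfolding dde_asymp_stable_iff_spec_rad_lt_1[of A h, OF nonneg delays]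
      spec_rad_frequency_lt_1_iff[of A, OF nonneg]
      spec_rad_lt_1_iff_lyapunov_vector[OF S_nonneg]
      uminus_add_conv_diff lyapunov_vector_iff_minus_id[symmetric]
      matrix_mul_assoc[symmetric] lmi_iff_lyapunov_vector[OF block_nonneg]
    using block_iff_sum by blast
qed

end
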